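(* Assume that the equation $$\dot x(t)=\sum_{j=-\infty}^{\infty}A_j(t)\,x(t+r_j)+\int_{\mathbb R}\mathcal K(\xi;t)\,x(t+\xi)\,d\xi \qquad (\mathrm E)$$ satisfies (HA), (HK), (HH) and (HSh1) as described in the context, and let $\alpha^{(k)}=(\tilde A_{-(K_{\mathrm{const}}+n)}^{(k,k)})_{n\ge0}$ and $\beta^{(k)}=(\tilde A_{K_{\mathrm{const}}+n}^{(k,k)})_{n\ge0}$ for $1\le k\le M$. Then the linear spans of $\{S^N\alpha^{(k)}:N\ge0\}$ and of $\{S^N\beta^{(k)}:N\ge0\}$ are both infinite-dimensional for every $1\le k\le M$ if and only if the cyclicity condition (HSh2) is satisfied.
   Context: $M\ge1$ is an integer, $|\cdot|$ is a norm on $\mathbb C^M$ with induced matrix norm, and $A^\dagger$ denotes the conjugate transpose; $A^{(k,k)}$ is the $(k,k)$ entry of a matrix $A$. In (E), $x(t)\in\mathbb C^M$, the shifts are $r_j\in\mathbb R$ ($j\in\mathbb Z$) with $\mathcal R=\{r_j\}$, $A_j(t)\in\mathbb C^{M\times M}$ and $\mathcal K(\xi;t)\in\mathbb C^{M\times M}$. Let $-\infty\le r_{\min}\le0\le r_{\max}\le\infty$, $r_{\min}<r_{\max}$, be such that all $r_j$ and the supports of all $\mathcal K(\cdot;t)$ lie in $\overline{(r_{\min},r_{\max})}$, with $|r_{\min}|$ and $r_{\max}$ as small as possible. For $\eta>0$ write $\|\mathcal V\|_\eta=\int_{\mathbb R}e^{\eta|\xi|}|\mathcal V(\xi)|\,d\xi$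 and $L^1_\eta$ for the space of $\mathcal V\in L^1(\mathbb R;\mathbb C^{M\times M})$ with $\|\mathcal V\|_\eta<\infty$; $\mathcal K(\cdot;t-\cdot)$ denotes $\xi\mapsto\mathcal K(\xi;t-\xi)$. Standing hypotheses, for some $\tilde\eta>0$: (HA) each $t\mapsto A_j(t)$ is bounded and $C^1$, $\sum_j\|A_j\|_\infty e^{\tilde\eta|r_j|}<\infty$, and $\mathcal R$ is closed with $0\in\mathcal R$. (HK) $t\mapsto\mathcal K(\cdot;t)$ lies in $C^1(\mathbb R;L^1_{\tilde\eta})$, with $\sup_t\|\mathcal K(\cdot;t)\|_{\tilde\eta}+\sup_t\|\tfrac{d}{dt}\mathcal K(\cdot;t)\|_{\tilde\eta}<\infty$ and $\sup_t\|\mathcal K(\cdot;t-\cdot)\|_{\tilde\eta}+\sup_t\|\tfrac{d}{dt}\mathcal K(\cdot;t-\cdot)\|_{\tilde\eta}<\infty$. (HH) the limits $A_j(\pm\infty)=\lim_{t\to\pm\infty}A_j(t)$, $\mathcal K(\xi;\pm\infty)=\lim_{t\to\pm\infty}\mathcal K(\xi;t)$ exist; $\lim_{t\to\pm\infty}\sum_j|A_j(t)-A_j(\pm\infty)|e^{\tilde\eta|r_j|}=0$, $\lim_{t\to\pm\infty}\|\mathcal K(\cdot;t)-\mathcal K(\cdot;\pm\infty)\|_{\tilde\eta}=0$, $\lim_{t\to\pm\infty}\|\mathcal K(\cdot;t-\cdot)-\mathcal K(\cdot;\pm\infty)\|_{\tilde\eta}=0$; and $\det\Delta^\pm(iy)\ne0$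 for all $y\in\mathbb R$, where $\Delta^\pm(z)=zI-\int_{\mathbb R}\mathcal K(\xi;\pm\infty)e^{z\xi}d\xi-\sum_jA_j(\pm\infty)e^{zr_j}$. (Hb): there exist an integer $K_{\mathrm{const}}\ge1$ and diagonal matrices $\tilde A_j$ ($|j|\ge K_{\mathrm{const}}$) and $\tilde{\mathcal K}(\xi)$ ($|\xi|\ge K_{\mathrm{const}}$) such that $r_j=j$ for all $j\in\mathbb Z$, $A_j(t)=\tilde A_j$ for all $t$ whenever $|j|\ge K_{\mathrm{const}}$, and $\mathcal K(\xi;t)=\tilde{\mathcal K}(\xi)$ for all $t$ whenever $|\xi|\ge K_{\mathrm{const}}$. (HSh1): (Hb) holds and $\mathcal K(\cdot;t)$ is supported in $[-K_{\mathrm{const}},K_{\mathrm{const}}]$ for each $t$. Backward shift: $S:\ell^2(\mathbb N_0;\mathbb C)\to\ell^2(\mathbb N_0;\mathbb C)$, $(a_n)_{n\ge0}\mapsto(a_n)_{n\ge1}$; $a$ is cyclic if $\operatorname{span}\{S^Na:N\ge0\}$ is dense in $\ell^2(\mathbb N_0;\mathbb C)$. (HSh2): the sequences $\alpha^{(k)}$ and $\beta^{(k)}$ are cyclic for $S$ for every $1\le k\le M$. *)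

theory Defs
  imports "HOL-Analysis.Analysis" "HOL-Library.Function_Algebras"
begin

section \<open>Matrices over C^M: complex^'m^'m (the dimension M is CARD('m))\<close>

text \<open>Scalar multiplication of a complex matrix by a complex number
  (note: * on the vec type is componentwise, so we do not use it).\<close>
definition cscale :: "complex \<Rightarrow> complex^'m^'m \<Rightarrow> complex^'m^'m" where
  "cscale c B = (\<chi> i j. c * B $ i $ j)"

definition diag_matrix :: "complex^'m^'m \<Rightarrow> bool" where
  "diag_matrix B \<longleftrightarrow> (\<forall>i j. i \<noteq> j \<longrightarrow> B $ i $ j = 0)"

definition wnorm :: "real \<Rightarrow> (real \<Rightarrow> complex^'m^'m) \<Rightarrow> real" where
  "wnorm eta V = (LINT xi|lborel. exp (eta * \<bar>xi\<bar>) * norm (V xi))"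

definition wL1 :: "real \<Rightarrow> (real \<Rightarrow> complex^'m^'m) \<Rightarrow> bool" where
  "wL1 eta V \<longleftrightarrow> V \<in> borel_measurable lborel \<and>
     integrable lborel (\<lambda>xi. exp (eta * \<bar>xi\<bar>) * norm (V xi))"

definition wL1_deriv :: "real \<Rightarrow> (real \<Rightarrow> real \<Rightarrow> complex^'m^'m) \<Rightarrow> (real \<Rightarrow> real \<Rightarrow> complex^'m^'m) \<Rightarrow> bool" where
  "wL1_deriv eta F DF \<longleftrightarrow>
     (\<forall>t. wL1 eta (F t) \<and> wL1 eta (DF t) \<and>
        ((\<lambda>h. wnorm eta (\<lambda>xi. inverse h *\<^sub>R (F (t + h) xi - F t xi) - DF t xi)) \<longlongrightarrow> 0) (at 0))"

definition wL1_C1 :: "real \<Rightarrow> (real \<Rightarrow> real \<Rightarrow> complex^'m^'m) \<Rightarrow> (real \<Rightarrow> real \<Rightarrow> complex^'m^'m) \<Rightarrow> bool" where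
  "wL1_C1 eta F DF \<longleftrightarrow> wL1_deriv eta F DF \<and>
     (\<forall>t. ((\<lambda>s. wnorm eta (\<lambda>xi. DF s xi - DF t xi)) \<longlongrightarrow> 0) (at t))"

definition Delta :: "(real \<Rightarrow> complex^'m^'m) \<Rightarrow> (int \<Rightarrow> complex^'m^'m) \<Rightarrow> (int \<Rightarrow> real)
    \<Rightarrow> complex \<Rightarrow> complex^'m^'m" where
  "Delta Kinf Ainf r z =
     mat z - (LINT xi|lborel. cscale (exp (z * of_real xi)) (Kinf xi))
           - (\<Sum>\<^sub>\<infinity>j. cscale (exp (z * of_real (r j))) (Ainf j))"

text \<open>Coefficients: A j t = A_j(t); kernel: K xi t = K(xi;t); shifts r j = r_j.\<close>

definition HA :: "real \<Rightarrow> (int \<Rightarrow> real) \<Rightarrow> (int \<Rightarrow> real \<Rightarrow> complex^'m^'m) \<Rightarrow> bool" where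
  "HA eta r A \<longleftrightarrow>
     (\<forall>j. bounded (range (A j)) \<and> A j C1_differentiable_on UNIV) \<and>
     (\<lambda>j. (SUP t. norm (A j t)) * exp (eta * \<bar>r j\<bar>)) summable_on UNIV \<and>
     closed (range r) \<and> 0 \<in> range r"

definition HK :: "real \<Rightarrow> (real \<Rightarrow> real \<Rightarrow> complex^'m^'m) \<Rightarrow> bool" where
  "HK eta K \<longleftrightarrow>
     (\<exists>DK. wL1_C1 eta (\<lambda>t xi. K xi t) DK \<and>
        bdd_above (range (\<lambda>t. wnorm eta (\<lambda>xi. K xi t))) \<and>
        bdd_above (range (\<lambda>t. wnorm eta (DK t)))) \<and>
     (\<exists>DKs. wL1_deriv eta (\<lambda>t xi. K xi (t - xi)) DKs \<and>
        bdd_above (range (\<lambda>t. wnorm eta (\<lambda>xi. K xi (t - xi)))) \<and>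
        bdd_above (range (\<lambda>t. wnorm eta (DKs t))))"

definition HH :: "real \<Rightarrow> (int \<Rightarrow> real) \<Rightarrow> (int \<Rightarrow> real \<Rightarrow> complex^'m^'m)
    \<Rightarrow> (real \<Rightarrow> real \<Rightarrow> complex^'m^'m) \<Rightarrow> bool" where
  "HH eta r A K \<longleftrightarrow>
     (\<exists>Ap Am Kp Km.
        (\<forall>j. (A j \<longlongrightarrow> Ap j) at_top) \<and> (\<forall>j. (A j \<longlongrightarrow> Am j) at_bot) \<and>
        (\<forall>xi. ((\<lambda>t. K xi t) \<longlongrightarrow> Kp xi) at_top) \<and>
        (\<forall>xi. ((\<lambda>t. K xi t) \<longlongrightarrow> Km xi) at_bot) \<and>
        ((\<lambda>t. \<Sum>\<^sub>\<infinity>j. norm (A j t - Ap j) * exp (eta * \<bar>r j\<bar>)) \<longlongrightarrow> 0) at_top \<and>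
        ((\<lambda>t. \<Sum>\<^sub>\<infinity>j. norm (A j t - Am j) * exp (eta * \<bar>r j\<bar>)) \<longlongrightarrow> 0) at_bot \<and>
        ((\<lambda>t. wnorm eta (\<lambda>xi. K xi t - Kp xi)) \<longlongrightarrow> 0) at_top \<and>
        ((\<lambda>t. wnorm eta (\<lambda>xi. K xi t - Km xi)) \<longlongrightarrow> 0) at_bot \<and>
        ((\<lambda>t. wnorm eta (\<lambda>xi. K xi (t - xi) - Kp xi)) \<longlongrightarrow> 0) at_top \<and>
        ((\<lambda>t. wnorm eta (\<lambda>xi. K xi (t - xi) - Km xi)) \<longlongrightarrow> 0) at_bot \<and>
        (\<forall>y::real. det (Delta Kp Ap r (\<i> * of_real y)) \<noteq> 0) \<and>
        (\<forall>y::real. det (Delta Km Am r (\<i> * of_real y)) \<noteq> 0))"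

definition Hb :: "(int \<Rightarrow> real) \<Rightarrow> (int \<Rightarrow> real \<Rightarrow> complex^'m^'m) \<Rightarrow> (real \<Rightarrow> real \<Rightarrow> complex^'m^'m)
    \<Rightarrow> int \<Rightarrow> (int \<Rightarrow> complex^'m^'m) \<Rightarrow> (real \<Rightarrow> complex^'m^'m) \<Rightarrow> bool" where
  "Hb r A K Kc Atil Ktil \<longleftrightarrow> Kc \<ge> 1 \<and>
     (\<forall>j. r j = of_int j) \<and>
     (\<forall>j. \<bar>j\<bar> \<ge> Kc \<longrightarrow> diag_matrix (Atil j) \<and> (\<forall>t. A j t = Atil j)) \<and>
     (\<forall>xi. \<bar>xi\<bar> \<ge> of_int Kc \<longrightarrow> diag_matrix (Ktil xi) \<and> (\<forall>t. K xi t = Ktil xi))"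

definition HSh1 :: "(int \<Rightarrow> real) \<Rightarrow> (int \<Rightarrow> real \<Rightarrow> complex^'m^'m) \<Rightarrow> (real \<Rightarrow> real \<Rightarrow> complex^'m^'m)
    \<Rightarrow> int \<Rightarrow> (int \<Rightarrow> complex^'m^'m) \<Rightarrow> (real \<Rightarrow> complex^'m^'m) \<Rightarrow> bool" where
  "HSh1 r A K Kc Atil Ktil \<longleftrightarrow> Hb r A K Kc Atil Ktil \<and>
     (\<forall>t xi. \<bar>xi\<bar> > of_int Kc \<longrightarrow> K xi t = 0)"

definition l2seq :: "(nat \<Rightarrow> complex) \<Rightarrow> bool" where
  "l2seq a \<longleftrightarrow> summable (\<lambda>n. (cmod (a n))\<^sup>2)"

definition l2norm :: "(nat \<Rightarrow> complex) \<Rightarrow> real" where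
  "l2norm a = sqrt (\<Sum>n. (cmod (a n))\<^sup>2)"

definition bshift :: "(nat \<Rightarrow> complex) \<Rightarrow> (nat \<Rightarrow> complex)" where
  "bshift a = (\<lambda>n. a (Suc n))"

definition seq_scale :: "complex \<Rightarrow> (nat \<Rightarrow> complex) \<Rightarrow> (nat \<Rightarrow> complex)" where
  "seq_scale c a = (\<lambda>n. c * a n)"

abbreviation cspan :: "(nat \<Rightarrow> complex) set \<Rightarrow> (nat \<Rightarrow> complex) set" where
  "cspan X \<equiv> module.span seq_scale X"

definition shift_orbit :: "(nat \<Rightarrow> complex) \<Rightarrow> (nat \<Rightarrow> complex) set" where
  "shift_orbit a = {(bshift ^^ N) a | N. True}"

definition infinite_dim_span :: "(nat \<Rightarrow> complex) set \<Rightarrow> bool" where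
  "infinite_dim_span X \<longleftrightarrow> \<not> (\<exists>B. finite B \<and> cspan X \<subseteq> cspan B)"

definition cyclic_bshift :: "(nat \<Rightarrow> complex) \<Rightarrow> bool" where
  "cyclic_bshift a \<longleftrightarrow> l2seq a \<and>
     (\<forall>b. l2seq b \<longrightarrow> (\<forall>e>0. \<exists>v\<in>cspan (shift_orbit a). l2norm (\<lambda>n. b n - v n) < e))"

end

theory Submission
  imports Defs "HOL-Complex_Analysis.Complex_Analysis"
begin

text \<open>
  By (HA) and (Hb) each diagonal sequence \<open>a\<close> among the \<open>\<alpha>\<close>'s and \<open>\<beta>\<close>'s decays
  exponentially: \<open>\<Sum>n. |a n| * exp \<eta> ^ n\<close> converges. For such a sequence, infinite
  dimension of the orbit span and cyclicity are both equivalent to \<open>a\<close> satisfying no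
  linear recurrence \<open>\<Sum>i\<le>d. p i * a (n + i) = 0\<close> with \<open>p d \<noteq> 0\<close>.

  A recurrence makes the orbit span finite-dimensional, and the functional
  \<open>x \<mapsto> \<Sum>i\<le>d. p i * x i\<close> is bounded on square-summable sequences, vanishes on the orbit
  and not on the \<open>d\<close>-th unit vector, so \<open>a\<close> is not cyclic. Conversely, if finitely many
  vectors span the orbit, then \<open>a, S a, \<dots>, S\<^sup>m a\<close> are dependent, which is a recurrence.

  If \<open>a\<close> is not cyclic, the residual of a best approximation of some \<open>b\<close> by the orbit
  span gives a bounded \<open>\<beta> \<noteq> 0\<close> with \<open>\<Sum>n. \<beta> n * a (n + N) = 0\<close> for every \<open>N\<close>. For
  \<open>A z = \<Sum>n. a n * z ^ n\<close> (holomorphic for \<open>|z| < exp \<eta>\<close>) and \<open>B w = \<Sum>n. \<beta> n * w ^ n\<close>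
  this says that \<open>A z * B (1 / z)\<close> has no negative powers of \<open>z\<close>: it is \<open>\<Psi> (1 / z)\<close> with
  \<open>\<Psi>\<close> holomorphic in the unit disc. Dividing out the finitely many zeros of \<open>B\<close> near
  \<open>0\<close>, \<open>A\<close> times a polynomial extends to an entire function of polynomial growth, so it
  is a polynomial by Liouville's theorem, and comparing coefficients gives a recurrence.
\<close>

section \<open>Shift orbits and linear recurrences\<close>

lemma (in vector_space) family_dependent_if_in_span:
  fixes f :: "nat \<Rightarrow> 'b"
  assumes "finite B" and "\<And>i. i \<le> card B \<Longrightarrow> f i \<in> span B"
  obtains q :: "nat \<Rightarrow> 'a" where "\<exists>i\<le>card B. q i \<noteq> 0" and "(\<Sum>i\<le>card B. scale (q i) (f i)) = 0"
proof (cases "inj_on f {..card B}")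
  case False
  then obtain i j where ij: "i < j" "j \<le> card B" "f i = f j"
    unfolding inj_on_def by (metis atMost_iff linorder_neqE_nat order.strict_trans1 less_imp_le)
  define q :: "nat \<Rightarrow> 'a" where "q l = (if l = j then 1 else if l = i then -1 else 0)" for l
  have "(\<Sum>l\<le>card B. scale (q l) (f l))
      = (\<Sum>l\<le>card B. (if l = j then f l else 0) - (if l = i then f l else 0))"
    using ij(1) by (intro sum.cong) (auto simp: q_def scale_minus_left)
  also have "\<dots> = 0"
    using ij by (simp add: sum_subtractf)
  finally show thesis using ij by (intro that[of q]) (auto simp: q_def)
next
  case True
  have "dependent (f ` {..card B})"
    using independent_span_bound[OF assms(1), of "f ` {..card B}"] card_image[OF True] assms(2)
    by auto
  then obtain u where u: "\<exists>v\<in>f ` {..card B}. u v \<noteq> 0" "(\<Sum>v\<in>f ` {..card B}. scale (u v) v) = 0"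
    unfolding dependent_finite[OF finite_imageI[OF finite_atMost]] by blast
  show thesis
  proof (rule that[of "u \<circ> f"])
    show "\<exists>i\<le>card B. (u \<circ> f) i \<noteq> 0" using u(1) by auto
    show "(\<Sum>i\<le>card B. scale ((u \<circ> f) i) (f i)) = 0"
      using u(2) by (simp add: sum.reindex[OF True])
  qed
qed

interpretation seq: vector_space seq_scale
  by unfold_locales (auto simp: seq_scale_def fun_eq_iff algebra_simps)

lemma sum_apply: "sum f A x = (\<Sum>i\<in>A. f i x)"
  by (induction A rule: infinite_finite_induct) auto

lemma funpow_bshift: "(bshift ^^ N) a = (\<lambda>n. a (N + n))"
  by (induction N arbitrary: a) (auto simp: bshift_def)

lemma funpow_bshift_in_shift_orbit: "(bshift ^^ N) a \<in> shift_orbit a"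
  unfolding shift_orbit_def by blast

definition linear_recurrent :: "(nat \<Rightarrow> complex) \<Rightarrow> bool" where
  "linear_recurrent a \<longleftrightarrow> (\<exists>d p. p d \<noteq> 0 \<and> (\<forall>n. (\<Sum>i\<le>d. p i * a (n + i)) = 0))"

lemma linear_recurrentI_eventually:
  assumes "p d \<noteq> 0" and "\<And>n. n \<ge> N \<Longrightarrow> (\<Sum>i\<le>d. p i * a (n + i)) = 0"
  shows "linear_recurrent a"
proof -
  define q where "q i = (if i < N then 0 else p (i - N))" for i
  have "(\<Sum>i\<le>d + N. q i * a (n + i)) = 0" for n
  proof -
    have "(\<Sum>i\<le>d + N. q i * a (n + i)) = (\<Sum>i=N..d + N. q i * a (n + i))"
      by (rule sum.mono_neutral_right) (auto simp: q_def)
    also have "\<dots> = (\<Sum>i=0..d. q (i + N) * a (n + (i + N)))"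
      using sum.shift_bounds_cl_nat_ivl[of "\<lambda>i. q i * a (n + i)" 0 N d] by simp
    also have "\<dots> = (\<Sum>i\<le>d. p i * a (n + N + i))"
      by (simp add: q_def atLeast0AtMost ac_simps)
    also have "\<dots> = 0" by (rule assms(2)) simp
    finally show ?thesis .
  qed
  moreover have "q (d + N) \<noteq> 0" using assms(1) by (simp add: q_def)
  ultimately show ?thesis unfolding linear_recurrent_def by blast
qed

lemma linear_recurrentI_nontrivial:
  assumes "\<exists>i\<le>m. q i \<noteq> 0" and "\<And>n. (\<Sum>i\<le>m. q i * a (n + i)) = 0"
  shows "linear_recurrent a"
proof -
  define d where "d = (GREATEST i. i \<le> m \<and> q i \<noteq> 0)"
  have d: "d \<le> m \<and> q d \<noteq> 0"
    unfolding d_def using assms(1) by (rule GreatestI_ex_nat) auto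
  have above: "i \<le> d" if "i \<le> m" "q i \<noteq> 0" for i
    unfolding d_def using that by (intro Greatest_le_nat[of _ _ m]) auto
  have "(\<Sum>i\<le>d. q i * a (n + i)) = (\<Sum>i\<le>m. q i * a (n + i))" for n
    using d above by (intro sum.mono_neutral_left) force+
  then show ?thesis unfolding linear_recurrent_def using d assms(2) by metis
qed

lemma finite_dim_span_if_linear_recurrent:
  assumes "linear_recurrent a"
  shows "\<not> infinite_dim_span (shift_orbit a)"
proof -
  obtain d p where pd: "p d \<noteq> 0" and rec: "\<And>n. (\<Sum>i\<le>d. p i * a (n + i)) = 0"
    using assms unfolding linear_recurrent_def by blast
  define F where "F = (\<lambda>i. (bshift ^^ i) a) ` {..<d}"
  have "(bshift ^^ N) a \<in> cspan F" for N
  proof (induction N rule: less_induct)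
    case (less N)
    show ?case
    proof (cases "N < d")
      case True
      then show ?thesis unfolding F_def by (intro seq.span_base) auto
    next
      case False
      then obtain m where m: "N = m + d" by (metis add.commute le_add_diff_inverse not_less)
      have "(bshift ^^ N) a = (\<Sum>i<d. seq_scale (- p i / p d) ((bshift ^^ (m + i)) a))"
      proof
        fix n
        have "p d * a (m + n + d) = - (\<Sum>i<d. p i * a (m + n + i))"
          using rec[of "m + n"] by (simp add: lessThan_Suc_atMost[symmetric] add_eq_0_iff)
        then have "a (m + n + d) = - (\<Sum>i<d. p i * a (m + n + i)) / p d"
          using pd by (simp add: field_simps)
        also have "\<dots> = (\<Sum>i<d. - p i / p d * a (m + n + i))"
          by (simp add: sum_divide_distrib sum_negf[symmetric])
        finally have "a (m + n + d) = (\<Sum>i<d. - p i / p d * a (m + n + i))" .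
        then show "(bshift ^^ N) a n = (\<Sum>i<d. seq_scale (- p i / p d) ((bshift ^^ (m + i)) a)) n"
          by (simp add: sum_apply funpow_bshift seq_scale_def m ac_simps)
      qed
      also have "\<dots> \<in> cspan F"
        using m pd by (intro seq.span_sum seq.span_scale less.IH) auto
      finally show ?thesis .
    qed
  qed
  then have "cspan (shift_orbit a) \<subseteq> cspan F"
    unfolding shift_orbit_def by (intro seq.span_minimal seq.subspace_span) auto
  then show ?thesis unfolding infinite_dim_span_def F_def by blast
qed

lemma linear_recurrent_if_finite_dim_span:
  assumes "\<not> infinite_dim_span (shift_orbit a)"
  shows "linear_recurrent a"
proof -
  obtain B where B: "finite B" "cspan (shift_orbit a) \<subseteq> cspan B"
    using assms unfolding infinite_dim_span_def by blast
  then have "\<And>i. i \<le> card B \<Longrightarrow> (bshift ^^ i) a \<in> cspan B"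
    using seq.span_base funpow_bshift_in_shift_orbit by blast
  then obtain q where q: "\<exists>i\<le>card B. q i \<noteq> 0"
    and dependent: "(\<Sum>i\<le>card B. seq_scale (q i) ((bshift ^^ i) a)) = 0"
    by (rule seq.family_dependent_if_in_span[OF B(1)])
  have "(\<Sum>i\<le>card B. q i * a (n + i)) = 0" for n
    using fun_cong[OF dependent, of n] by (simp add: sum_apply seq_scale_def funpow_bshift add.commute)
  with q show ?thesis by (rule linear_recurrentI_nontrivial)
qed

lemma infinite_dim_span_shift_orbit_iff:
  "infinite_dim_span (shift_orbit a) \<longleftrightarrow> \<not> linear_recurrent a"
  using finite_dim_span_if_linear_recurrent linear_recurrent_if_finite_dim_span by blast

section \<open>Square-summable sequences\<close>

lemma l2seq_add:
  assumes "l2seq x" and "l2seq y"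
  shows "l2seq (\<lambda>n. x n + y n)"
proof -
  have bound: "(cmod (x n + y n))\<^sup>2 \<le> 2 * (cmod (x n))\<^sup>2 + 2 * (cmod (y n))\<^sup>2" for n
  proof -
    have "(cmod (x n + y n))\<^sup>2 \<le> (cmod (x n) + cmod (y n))\<^sup>2"
      by (intro power_mono norm_triangle_ineq) auto
    also have "\<dots> \<le> 2 * (cmod (x n))\<^sup>2 + 2 * (cmod (y n))\<^sup>2"
      using zero_le_power2[of "cmod (x n) - cmod (y n)"] by (simp add: power2_eq_square algebra_simps)
    finally show ?thesis .
  qed
  have "summable (\<lambda>n. 2 * (cmod (x n))\<^sup>2 + 2 * (cmod (y n))\<^sup>2)"
    using assms unfolding l2seq_def by (intro summable_add summable_mult)
  then show ?thesis
    unfolding l2seq_def by (rule summable_comparison_test'[where N = 0]) (use bound in auto)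
qed

lemma l2seq_scale: "l2seq x \<Longrightarrow> l2seq (\<lambda>n. c * x n)"
  unfolding l2seq_def by (simp add: norm_mult power_mult_distrib summable_mult)

lemma l2seq_diff: "l2seq x \<Longrightarrow> l2seq y \<Longrightarrow> l2seq (\<lambda>n. x n - y n)"
  using l2seq_add[of x "\<lambda>n. - 1 * y n"] l2seq_scale[of y "- 1"] by simp

lemma subspace_l2seq: "seq.subspace (Collect l2seq)"
proof -
  have "l2seq 0" unfolding l2seq_def by simp
  moreover have "l2seq (x + y)" if "l2seq x" "l2seq y" for x y
    using l2seq_add[OF that] by (simp add: plus_fun_def)
  moreover have "l2seq (seq_scale c x)" if "l2seq x" for c x
    using l2seq_scale[OF that] by (simp add: seq_scale_def)
  ultimately show ?thesis unfolding seq.subspace_def by blast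
qed

lemma l2seq_funpow_bshift: "l2seq a \<Longrightarrow> l2seq ((bshift ^^ N) a)"
  unfolding l2seq_def funpow_bshift
  using summable_iff_shift[of "\<lambda>n. (cmod (a n))\<^sup>2" N] by (simp add: add.commute)

lemma l2seq_if_in_span_shift_orbit:
  assumes "l2seq a" and "v \<in> cspan (shift_orbit a)"
  shows "l2seq v"
proof -
  have "cspan (shift_orbit a) \<subseteq> Collect l2seq"
    using assms(1) l2seq_funpow_bshift
    by (intro seq.span_minimal subspace_l2seq) (auto simp: shift_orbit_def)
  with assms(2) show ?thesis by blast
qed

lemma norm_le_l2norm:
  assumes "l2seq x"
  shows "cmod (x i) \<le> l2norm x"
proof -
  have "(cmod (x i))\<^sup>2 \<le> (\<Sum>n. (cmod (x n))\<^sup>2)"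
    using sum_le_suminf[of "\<lambda>n. (cmod (x n))\<^sup>2" "{i}"] assms unfolding l2seq_def by auto
  then show ?thesis unfolding l2norm_def by (simp add: real_le_rsqrt)
qed

lemma l2seq_if_summable_norm:
  assumes "summable (\<lambda>n. cmod (a n))"
  shows "l2seq a"
proof -
  have "\<forall>\<^sub>F n in sequentially. cmod (a n) < 1"
    using summable_LIMSEQ_zero[OF assms] by (rule order_tendstoD) simp
  then obtain N where small: "\<And>n. n \<ge> N \<Longrightarrow> cmod (a n) < 1"
    unfolding eventually_sequentially by blast
  have "norm ((cmod (a n))\<^sup>2) \<le> cmod (a n)" if "n \<ge> N" for n
    using mult_left_le[OF less_imp_le[OF small[OF that]], of "cmod (a n)"]
    by (simp add: power2_eq_square)
  then show ?thesis
    unfolding l2seq_def using assms by (rule summable_comparison_test'[rotated])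
qed

lemma not_cyclic_if_linear_recurrent:
  assumes "linear_recurrent a"
  shows "\<not> cyclic_bshift a"
proof
  assume cyclic: "cyclic_bshift a"
  obtain d p where pd: "p d \<noteq> 0" and rec: "\<And>n. (\<Sum>i\<le>d. p i * a (n + i)) = 0"
    using assms unfolding linear_recurrent_def by blast
  define L where "L x = (\<Sum>i\<le>d. p i * x i)" for x
  have "seq.subspace {x. L x = 0}"
    unfolding seq.subspace_def L_def
    by (simp add: seq_scale_def distrib_left sum.distrib mult.left_commute sum_distrib_left[symmetric])
  then have L_span: "cspan (shift_orbit a) \<subseteq> {x. L x = 0}"
    by (rule seq.span_minimal[rotated]) (auto simp: shift_orbit_def funpow_bshift L_def rec)
  define b where "b n = (if n = d then 1 else 0 :: complex)" for n
  have "l2seq b"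
    unfolding l2seq_def b_def by (rule summable_finite[of "{d}"]) auto
  define S where "S = (\<Sum>i\<le>d. cmod (p i))"
  have "S \<ge> 0" unfolding S_def by (simp add: sum_nonneg)
  then have "cmod (p d) / (1 + S) > 0" using pd by simp
  then obtain v where v: "v \<in> cspan (shift_orbit a)"
    and close: "l2norm (\<lambda>n. b n - v n) < cmod (p d) / (1 + S)"
    using cyclic \<open>l2seq b\<close> unfolding cyclic_bshift_def by blast
  have "l2seq (\<lambda>n. b n - v n)"
    using l2seq_diff[OF \<open>l2seq b\<close> l2seq_if_in_span_shift_orbit] cyclic v
    unfolding cyclic_bshift_def by blast
  have "L b = p d"
    by (simp add: L_def b_def if_distrib cong: if_cong)
  moreover have "L v = 0"
    using L_span v by blast
  ultimately have "p d = L b - L v" by simp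
  also have "\<dots> = (\<Sum>i\<le>d. p i * (b i - v i))"
    by (simp add: L_def right_diff_distrib sum_subtractf)
  finally have "cmod (p d) \<le> (\<Sum>i\<le>d. cmod (p i) * cmod (b i - v i))"
    by (simp add: norm_mult[symmetric] norm_sum)
  also have "\<dots> \<le> (\<Sum>i\<le>d. cmod (p i) * l2norm (\<lambda>n. b n - v n))"
    using norm_le_l2norm[OF \<open>l2seq (\<lambda>n. b n - v n)\<close>] by (intro sum_mono mult_left_mono) auto
  also have "\<dots> = S * l2norm (\<lambda>n. b n - v n)"
    unfolding S_def by (simp add: sum_distrib_right)
  also have "\<dots> \<le> S * (cmod (p d) / (1 + S))"
    using close \<open>S \<ge> 0\<close> by (intro mult_left_mono) auto
  also have "\<dots> < cmod (p d)"
    using pd \<open>S \<ge> 0\<close> by (simp add: field_simps)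
  finally show False by simp
qed

section \<open>Annihilators of a non-dense orbit span\<close>

text \<open>Both are only meaningful for square-summable arguments: otherwise \<open>suminf\<close>
  returns an unspecified value.\<close>

definition l2sq :: "(nat \<Rightarrow> complex) \<Rightarrow> real" where
  "l2sq x = (\<Sum>n. (cmod (x n))\<^sup>2)"

definition l2_inner_re :: "(nat \<Rightarrow> complex) \<Rightarrow> (nat \<Rightarrow> complex) \<Rightarrow> real" where
  "l2_inner_re x y = (\<Sum>n. Re (x n * cnj (y n)))"

lemma l2norm_eq_sqrt_l2sq: "l2norm x = sqrt (l2sq x)"
  unfolding l2norm_def l2sq_def ..

lemma l2sq_nonneg: "l2seq x \<Longrightarrow> l2sq x \<ge> 0"
  unfolding l2sq_def l2seq_def by (rule suminf_nonneg) auto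

lemma l2sq_scale: "l2seq x \<Longrightarrow> l2sq (\<lambda>n. c * x n) = (cmod c)\<^sup>2 * l2sq x"
  unfolding l2sq_def l2seq_def by (simp add: norm_mult power_mult_distrib suminf_mult)

lemma summable_Re_mult_cnj:
  assumes "l2seq x" and "l2seq y"
  shows "summable (\<lambda>n. Re (x n * cnj (y n)))"
proof -
  have "(\<lambda>n. Re (x n * cnj (y n)))
      = (\<lambda>n. ((cmod (x n))\<^sup>2 + (cmod (y n))\<^sup>2 - (cmod (x n - y n))\<^sup>2) / 2)"
    unfolding cmod_power2 by (simp add: power2_eq_square fun_eq_iff field_simps)
  moreover have "summable (\<lambda>n. ((cmod (x n))\<^sup>2 + (cmod (y n))\<^sup>2 - (cmod (x n - y n))\<^sup>2) / 2)"
    using assms l2seq_diff[OF assms] unfolding l2seq_def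
    by (intro summable_divide summable_diff summable_add)
  ultimately show ?thesis by (simp only:)
qed

lemma l2sq_add_scaled:
  assumes "l2seq x" and "l2seq y"
  shows "l2sq (\<lambda>n. x n + of_real t * y n) = l2sq x + t\<^sup>2 * l2sq y + 2 * t * l2_inner_re x y"
proof -
  define X Y R where "X n = (cmod (x n))\<^sup>2" and "Y n = (cmod (y n))\<^sup>2"
    and "R n = Re (x n * cnj (y n))" for n
  have pointwise: "(cmod (x n + of_real t * y n))\<^sup>2 = X n + t\<^sup>2 * Y n + 2 * t * R n" for n
    unfolding X_def Y_def R_def cmod_power2 by (simp add: power2_eq_square algebra_simps)
  have "summable X" "summable Y" "summable R"
    using assms summable_Re_mult_cnj[OF assms] unfolding l2seq_def X_def Y_def R_def by auto
  then have "(\<lambda>n. X n + t\<^sup>2 * Y n + 2 * t * R n) sums (suminf X + t\<^sup>2 * suminf Y + 2 * t * suminf R)"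
    by (intro sums_add sums_mult summable_sums)
  then show ?thesis
    unfolding l2sq_def l2_inner_re_def X_def[symmetric] Y_def[symmetric] R_def[symmetric] pointwise
    by (rule sums_unique[symmetric])
qed

lemma l2sq_parallelogram:
  assumes "l2seq x" and "l2seq y"
  shows "l2sq (\<lambda>n. x n - y n) + l2sq (\<lambda>n. x n + y n) = 2 * l2sq x + 2 * l2sq y"
  using l2sq_add_scaled[OF assms, where t = 1] l2sq_add_scaled[OF assms, where t = "- 1"] by simp

lemma minimizing_sequence:
  fixes F :: "'a \<Rightarrow> real"
  assumes "x \<in> V" and "\<And>v. v \<in> V \<Longrightarrow> 0 \<le> F v"
  obtains v where "\<And>k. v k \<in> V" and "\<And>k. F (v k) < Inf (F ` V) + 1 / (real k + 1)"
    and "\<And>y. y \<in> V \<Longrightarrow> Inf (F ` V) \<le> F y"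
proof -
  have "\<exists>y\<in>F ` V. y < Inf (F ` V) + 1 / (real k + 1)" for k
    using \<open>x \<in> V\<close> by (intro cInf_lessD) auto
  then have "\<forall>k. \<exists>v. v \<in> V \<and> F v < Inf (F ` V) + 1 / (real k + 1)" by blast
  then obtain v where "\<forall>k. v k \<in> V \<and> F (v k) < Inf (F ` V) + 1 / (real k + 1)"
    by (rule choice[THEN exE])
  moreover have "Inf (F ` V) \<le> F y" if "y \<in> V" for y
    using that assms(2) by (intro cInf_lower bdd_belowI[of _ 0]) auto
  ultimately show thesis using that by blast
qed

text \<open>\<open>w k = b - v k\<close> with \<open>v k \<in> V\<close> almost minimising the distance to \<open>b\<close>: the
  parallelogram law makes \<open>w\<close> Cauchy, and minimality along the line \<open>v k + t u\<close> gives the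
  last inequality.\<close>

lemma l2_minimizing_sequence:
  assumes V: "seq.subspace V" "V \<subseteq> Collect l2seq" and b: "l2seq b"
  obtains w where "\<And>k. \<exists>v\<in>V. w k = (\<lambda>n. b n - v n)"
    and "\<And>k j. l2sq (\<lambda>n. w k n - w j n) \<le> 2 / (real k + 1) + 2 / (real j + 1)"
    and "\<And>k u t. u \<in> V \<Longrightarrow> 2 * t * l2_inner_re (w k) u < 1 / (real k + 1) + t\<^sup>2 * l2sq u"
proof -
  have comb: "(\<lambda>n. c * x n + d * y n) \<in> V" if "x \<in> V" "y \<in> V" for x y c d
  proof -
    have "seq_scale c x + seq_scale d y \<in> V"
      using that by (intro seq.subspace_add seq.subspace_scale V(1))
    then show ?thesis by (simp add: plus_fun_def seq_scale_def)
  qed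
  have l2: "l2seq (\<lambda>n. b n - v n)" if "v \<in> V" for v
    using l2seq_diff[OF b] V(2) that by blast
  define F where "F v = l2sq (\<lambda>n. b n - v n)" for v
  obtain v where v: "\<And>k. v k \<in> V" and Fv: "\<And>k. F (v k) < Inf (F ` V) + 1 / (real k + 1)"
    and below: "\<And>x. x \<in> V \<Longrightarrow> Inf (F ` V) \<le> F x"
    using minimizing_sequence[OF seq.subspace_0[OF V(1)], of F] l2sq_nonneg[OF l2]
    unfolding F_def by blast
  define w where "w k = (\<lambda>n. b n - v k n)" for k
  have lw: "l2seq (w k)" for k unfolding w_def using l2[OF v] .
  show thesis
  proof (rule that)
    show "\<exists>v\<in>V. w k = (\<lambda>n. b n - v n)" for k unfolding w_def using v by blast
  next
    fix k j
    define m where "m = (\<lambda>n. 1/2 * v k n + 1/2 * v j n)"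
    have "m \<in> V" unfolding m_def by (rule comb[OF v v])
    have "(\<lambda>n. w k n + w j n) = (\<lambda>n. 2 * (b n - m n))"
      by (simp add: w_def m_def fun_eq_iff algebra_simps)
    then have "l2sq (\<lambda>n. w k n + w j n) = 4 * F m"
      using l2sq_scale[OF l2[OF \<open>m \<in> V\<close>], of 2] by (simp add: F_def)
    with l2sq_parallelogram[OF lw lw, of k j] below[OF \<open>m \<in> V\<close>] Fv[of k] Fv[of j]
    show "l2sq (\<lambda>n. w k n - w j n) \<le> 2 / (real k + 1) + 2 / (real j + 1)"
      unfolding F_def w_def by linarith
  next
    fix k u t assume "u \<in> V"
    then have "Inf (F ` V) \<le> F (\<lambda>n. 1 * v k n + of_real t * u n)"
      using comb[OF v] by (intro below) blast
    also have "\<dots> = l2sq (\<lambda>n. w k n + of_real (- t) * u n)"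
      unfolding F_def w_def by (simp add: algebra_simps)
    also have "\<dots> = F (v k) + t\<^sup>2 * l2sq u - 2 * t * l2_inner_re (w k) u"
      using l2sq_add_scaled[OF lw[of k], of u "- t"] V(2) \<open>u \<in> V\<close> unfolding F_def w_def by auto
    finally show "2 * t * l2_inner_re (w k) u < 1 / (real k + 1) + t\<^sup>2 * l2sq u"
      using Fv[of k] by simp
  qed
qed

lemma LIMSEQ_const_divide_real_plus_1: "(\<lambda>k. a / (real k + 1)) \<longlonglongrightarrow> 0"
  using LIMSEQ_Suc[OF lim_const_over_n[of a]] by (simp add: add.commute)

lemma eq_0_if_linear_le_quadratic:
  fixes r N :: real
  assumes "N \<ge> 0" and "\<And>t. 2 * t * r \<le> t\<^sup>2 * N"
  shows "r = 0"
proof (rule ccontr)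
  assume "r \<noteq> 0"
  define t where "t = r / (N + 1)"
  have t: "t * (N + 1) = r" unfolding t_def using \<open>N \<ge> 0\<close> by simp
  have "2 * t * r * (N + 1)\<^sup>2 \<le> t\<^sup>2 * N * (N + 1)\<^sup>2"
    using assms(2)[of t] by (intro mult_right_mono) auto
  moreover have "2 * t * r * (N + 1)\<^sup>2 = 2 * r\<^sup>2 * (N + 1)"
    by (simp add: power2_eq_square t[symmetric] algebra_simps)
  moreover have "t\<^sup>2 * N * (N + 1)\<^sup>2 = r\<^sup>2 * N"
    by (simp add: power2_eq_square t[symmetric] algebra_simps)
  ultimately have "2 * r\<^sup>2 * (N + 1) \<le> r\<^sup>2 * N" by linarith
  then have "r\<^sup>2 * (N + 2) \<le> 0" by (simp add: algebra_simps)
  moreover have "r\<^sup>2 * (N + 2) > 0" using \<open>r \<noteq> 0\<close> \<open>N \<ge> 0\<close> by (intro mult_pos_pos) auto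
  ultimately show False by linarith
qed

lemma l2_coordinatewise_limit:
  assumes l2: "\<And>k. l2seq (w k)"
    and cauchy: "\<And>k j. l2sq (\<lambda>n. w k n - w j n) \<le> 2 / (real k + 1) + 2 / (real j + 1)"
  obtains c where "\<And>k M. (\<Sum>n<M. (cmod (w k n - c n))\<^sup>2) \<le> 2 / (real k + 1)"
    and "\<And>k n. cmod (w k n - c n) \<le> sqrt (2 / (real k + 1))"
proof -
  have partial: "(\<Sum>n<M. (cmod (w k n - w j n))\<^sup>2) \<le> 2 / (real k + 1) + 2 / (real j + 1)"
    for k j M
  proof -
    have "(\<Sum>n<M. (cmod (w k n - w j n))\<^sup>2) \<le> l2sq (\<lambda>n. w k n - w j n)"
      using l2seq_diff[OF l2 l2] unfolding l2sq_def l2seq_def by (intro sum_le_suminf) auto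
    then show ?thesis using cauchy by (rule order_trans)
  qed
  have "Cauchy (\<lambda>k. w k n)" for n
  proof (rule CauchyI)
    fix r :: real assume "r > 0"
    then obtain M where M: "\<And>k. k \<ge> M \<Longrightarrow> 2 / (real k + 1) < r\<^sup>2 / 2"
      using order_tendstoD(2)[OF LIMSEQ_const_divide_real_plus_1, of "r\<^sup>2 / 2" 2]
      by (auto simp: eventually_sequentially)
    have "norm (w k n - w j n) < r" if "k \<ge> M" "j \<ge> M" for k j
    proof -
      have "(cmod (w k n - w j n))\<^sup>2 \<le> (\<Sum>i<Suc n. (cmod (w k i - w j i))\<^sup>2)"
        by (rule member_le_sum) auto
      also have "\<dots> \<le> 2 / (real k + 1) + 2 / (real j + 1)" by (rule partial)
      also have "\<dots> < r\<^sup>2" using M[OF that(1)] M[OF that(2)] by linarith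
      finally show ?thesis using \<open>r > 0\<close> by (simp add: power2_less_imp_less)
    qed
    then show "\<exists>M. \<forall>k\<ge>M. \<forall>j\<ge>M. norm (w k n - w j n) < r" by blast
  qed
  then have lim: "(\<lambda>j. w j n) \<longlonglongrightarrow> lim (\<lambda>j. w j n)" for n
    by (simp add: Cauchy_convergent_iff convergent_LIMSEQ_iff)
  define c where "c n = lim (\<lambda>j. w j n)" for n
  have partial_c: "(\<Sum>n<M. (cmod (w k n - c n))\<^sup>2) \<le> 2 / (real k + 1)" for k M
  proof (rule tendsto_le[OF trivial_limit_sequentially])
    show "(\<lambda>j. 2 / (real k + 1) + 2 / (real j + 1)) \<longlonglongrightarrow> 2 / (real k + 1)"
      using tendsto_add[OF tendsto_const LIMSEQ_const_divide_real_plus_1] by simp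
    show "(\<lambda>j. \<Sum>n<M. (cmod (w k n - w j n))\<^sup>2) \<longlonglongrightarrow> (\<Sum>n<M. (cmod (w k n - c n))\<^sup>2)"
      unfolding c_def by (intro tendsto_intros lim)
    show "\<forall>\<^sub>F j in sequentially. (\<Sum>n<M. (cmod (w k n - w j n))\<^sup>2)
        \<le> 2 / (real k + 1) + 2 / (real j + 1)"
      using partial by (intro always_eventually allI)
  qed
  moreover have "cmod (w k n - c n) \<le> sqrt (2 / (real k + 1))" for k n
  proof -
    have "(cmod (w k n - c n))\<^sup>2 \<le> (\<Sum>i<Suc n. (cmod (w k i - c i))\<^sup>2)"
      by (rule member_le_sum) auto
    also have "\<dots> \<le> 2 / (real k + 1)" by (rule partial_c)
    finally show ?thesis by (rule real_le_rsqrt)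
  qed
  ultimately show thesis by (rule that)
qed

lemma summable_norm_mult_cnj_if_bounded:
  assumes "\<And>n. cmod (f n) \<le> B" and "summable (\<lambda>n. cmod (u n))"
  shows "summable (\<lambda>n. cmod (f n * cnj (u n)))"
proof (rule summable_comparison_test'[where N = 0])
  show "summable (\<lambda>n. B * cmod (u n))" using assms(2) by (rule summable_mult)
  show "norm (cmod (f n * cnj (u n))) \<le> B * cmod (u n)" for n
    using assms(1) by (simp add: norm_mult mult_right_mono)
qed

lemma summable_Re_mult_cnj_if_bounded:
  assumes "\<And>n. cmod (f n) \<le> B" and "summable (\<lambda>n. cmod (u n))"
  shows "summable (\<lambda>n. Re (f n * cnj (u n)))"
proof (rule summable_comparison_test'[where N = 0])
  show "summable (\<lambda>n. cmod (f n * cnj (u n)))" by (rule summable_norm_mult_cnj_if_bounded[OF assms])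
  show "norm (Re (f n * cnj (u n))) \<le> cmod (f n * cnj (u n))" for n
    by (simp only: real_norm_def abs_Re_le_cmod)
qed

lemma l2_inner_re_tendsto:
  assumes close: "\<And>k n. cmod (w k n - c n) \<le> \<epsilon> k" and "\<epsilon> \<longlonglongrightarrow> 0"
    and bounded: "\<And>n. cmod (c n) \<le> C" and u: "summable (\<lambda>n. cmod (u n))"
  shows "(\<lambda>k. l2_inner_re (w k) u) \<longlonglongrightarrow> l2_inner_re c u"
proof -
  have bound: "\<bar>l2_inner_re (w k) u - l2_inner_re c u\<bar> \<le> \<epsilon> k * (\<Sum>n. cmod (u n))" for k
  proof -
    have w_bounded: "cmod (w k n) \<le> C + \<epsilon> k" for n
      using norm_triangle_ineq[of "w k n - c n" "c n"] close[of k n] bounded[of n] by simp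
    have "l2_inner_re (w k) u - l2_inner_re c u
        = (\<Sum>n. Re (w k n * cnj (u n)) - Re (c n * cnj (u n)))"
      unfolding l2_inner_re_def
      by (rule suminf_diff[OF summable_Re_mult_cnj_if_bounded[OF w_bounded u]
            summable_Re_mult_cnj_if_bounded[OF bounded u]])
    also have "\<dots> = (\<Sum>n. Re ((w k n - c n) * cnj (u n)))"
      by (simp only: left_diff_distrib minus_complex.sel)
    finally have diff: "l2_inner_re (w k) u - l2_inner_re c u = (\<Sum>n. Re ((w k n - c n) * cnj (u n)))" .
    have pointwise: "\<bar>Re ((w k n - c n) * cnj (u n))\<bar> \<le> \<epsilon> k * cmod (u n)" for n
    proof -
      have "\<bar>Re ((w k n - c n) * cnj (u n))\<bar> \<le> cmod ((w k n - c n) * cnj (u n))"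
        by (rule abs_Re_le_cmod)
      also have "\<dots> = cmod (w k n - c n) * cmod (u n)" by (simp add: norm_mult)
      also have "\<dots> \<le> \<epsilon> k * cmod (u n)" using close by (rule mult_right_mono) simp
      finally show ?thesis .
    qed
    have "summable (\<lambda>n. \<epsilon> k * cmod (u n))" using u by (rule summable_mult)
    moreover from this have "summable (\<lambda>n. \<bar>Re ((w k n - c n) * cnj (u n))\<bar>)"
      by (rule summable_comparison_test'[where N = 0]) (use pointwise in simp)
    ultimately have "\<bar>\<Sum>n. Re ((w k n - c n) * cnj (u n))\<bar> \<le> (\<Sum>n. \<epsilon> k * cmod (u n))"
      using pointwise by (intro order_trans[OF summable_rabs suminf_le]) auto
    then show ?thesis unfolding diff using suminf_mult[OF u] by simp
  qed
  have "(\<lambda>k. \<epsilon> k * (\<Sum>n. cmod (u n))) \<longlonglongrightarrow> 0"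
    using tendsto_mult_left_zero[OF \<open>\<epsilon> \<longlonglongrightarrow> 0\<close>] by simp
  then have "(\<lambda>k. l2_inner_re (w k) u - l2_inner_re c u) \<longlonglongrightarrow> 0"
    by (rule Lim_null_comparison[rotated]) (use bound in simp)
  then show ?thesis
    by (simp add: LIM_zero_iff)
qed

lemma l2_inner_re_eq_0_if_variational:
  assumes close: "\<And>k n. cmod (w k n - c n) \<le> \<epsilon> k" and "\<epsilon> \<longlonglongrightarrow> 0"
    and bounded: "\<And>n. cmod (c n) \<le> C" and u: "summable (\<lambda>n. cmod (u n))"
    and "l2sq u \<ge> 0"
    and variational: "\<And>k t. 2 * t * l2_inner_re (w k) u < 1 / (real k + 1) + t\<^sup>2 * l2sq u"
  shows "l2_inner_re c u = 0"
  using \<open>l2sq u \<ge> 0\<close>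
proof (rule eq_0_if_linear_le_quadratic)
  fix t :: real
  show "2 * t * l2_inner_re c u \<le> t\<^sup>2 * l2sq u"
  proof (rule tendsto_le[OF trivial_limit_sequentially])
    show "(\<lambda>k. 1 / (real k + 1) + t\<^sup>2 * l2sq u) \<longlonglongrightarrow> t\<^sup>2 * l2sq u"
      using tendsto_add[OF LIMSEQ_const_divide_real_plus_1 tendsto_const] by simp
    show "(\<lambda>k. 2 * t * l2_inner_re (w k) u) \<longlonglongrightarrow> 2 * t * l2_inner_re c u"
      by (intro tendsto_mult_left l2_inner_re_tendsto[OF close \<open>\<epsilon> \<longlonglongrightarrow> 0\<close> bounded u])
    show "\<forall>\<^sub>F k in sequentially. 2 * t * l2_inner_re (w k) u \<le> 1 / (real k + 1) + t\<^sup>2 * l2sq u"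
      using variational by (intro always_eventually allI less_imp_le)
  qed
qed

text \<open>The annihilator is the coordinatewise limit of the minimising residuals. It is only
  shown to be bounded, which suffices because it is paired with absolutely summable
  sequences.\<close>

lemma l2_annihilator:
  assumes V: "seq.subspace V" "V \<subseteq> Collect l2seq" and b: "l2seq b" and "e > 0"
    and far: "\<And>v. v \<in> V \<Longrightarrow> e \<le> l2norm (\<lambda>n. b n - v n)"
  obtains c C where "\<And>n. cmod (c n) \<le> C" and "\<exists>n. c n \<noteq> 0"
    and "\<And>u. u \<in> V \<Longrightarrow> summable (\<lambda>n. cmod (u n)) \<Longrightarrow> l2_inner_re c u = 0"
proof -
  obtain w where wV: "\<And>k. \<exists>v\<in>V. w k = (\<lambda>n. b n - v n)"
    and cauchy: "\<And>k j. l2sq (\<lambda>n. w k n - w j n) \<le> 2 / (real k + 1) + 2 / (real j + 1)"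
    and variational: "\<And>k u t. u \<in> V \<Longrightarrow>
      2 * t * l2_inner_re (w k) u < 1 / (real k + 1) + t\<^sup>2 * l2sq u"
    using l2_minimizing_sequence[OF V b] by blast
  have l2w: "l2seq (w k)" and far_w: "e\<^sup>2 \<le> l2sq (w k)" for k
  proof -
    obtain v where "v \<in> V" and w: "w k = (\<lambda>n. b n - v n)"
      using wV[of k] by blast
    show "l2seq (w k)"
      unfolding w using l2seq_diff[OF b, of v] V(2) \<open>v \<in> V\<close> by blast
    have "e \<le> sqrt (l2sq (w k))"
      using far[OF \<open>v \<in> V\<close>] unfolding w l2norm_eq_sqrt_l2sq .
    then have "e\<^sup>2 \<le> (sqrt (l2sq (w k)))\<^sup>2"
      using \<open>e > 0\<close> by (intro power_mono) auto
    then show "e\<^sup>2 \<le> l2sq (w k)" using l2sq_nonneg[OF \<open>l2seq (w k)\<close>] by simp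
  qed
  define \<epsilon> where "\<epsilon> k = sqrt (2 / (real k + 1))" for k
  obtain c where partial: "\<And>k M. (\<Sum>n<M. (cmod (w k n - c n))\<^sup>2) \<le> 2 / (real k + 1)"
    and close: "\<And>k n. cmod (w k n - c n) \<le> \<epsilon> k"
    unfolding \<epsilon>_def using l2_coordinatewise_limit[OF l2w cauchy] by blast
  have "\<epsilon> \<longlonglongrightarrow> 0"
    unfolding \<epsilon>_def using tendsto_real_sqrt[OF LIMSEQ_const_divide_real_plus_1] by simp
  have bounded: "cmod (c n) \<le> l2norm (w 0) + \<epsilon> 0" for n
    using norm_triangle_sub[of "c n" "w 0 n"] norm_le_l2norm[OF l2w, of 0 n] close[of 0 n]
    by (simp add: norm_minus_commute)
  show thesis
  proof (rule that[OF bounded])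
    show "\<exists>n. c n \<noteq> 0"
    proof (rule ccontr)
      assume "\<not> (\<exists>n. c n \<noteq> 0)"
      then have "(\<Sum>n<M. (cmod (w k n))\<^sup>2) \<le> 2 / (real k + 1)" for k M
        using partial[of k M] by simp
      then have "l2sq (w k) \<le> 2 / (real k + 1)" for k
        using l2w[of k] unfolding l2sq_def l2seq_def by (intro suminf_le_const)
      obtain k where "2 / (real k + 1) < e\<^sup>2"
        using order_tendstoD(2)[OF LIMSEQ_const_divide_real_plus_1, of "e\<^sup>2" 2] \<open>e > 0\<close>
        by (auto simp: eventually_sequentially)
      with far_w[of k] \<open>l2sq (w k) \<le> 2 / (real k + 1)\<close> show False by linarith
    qed
  next
    fix u assume "u \<in> V" and "summable (\<lambda>n. cmod (u n))"
    then show "l2_inner_re c u = 0"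
      using V(2) variational[OF \<open>u \<in> V\<close>]
      by (intro l2_inner_re_eq_0_if_variational[OF close \<open>\<epsilon> \<longlonglongrightarrow> 0\<close> bounded] l2sq_nonneg) auto
  qed
qed

lemma sums_cnj_mult_eq_0_if_l2_inner_re_eq_0:
  assumes "\<And>n. cmod (c n) \<le> C" and u: "summable (\<lambda>n. cmod (u n))"
    and "l2_inner_re c u = 0" and "l2_inner_re c (\<lambda>n. \<i> * u n) = 0"
  shows "(\<lambda>n. cnj (c n) * u n) sums 0"
proof -
  have "summable (\<lambda>n. c n * cnj (u n))"
    using summable_norm_mult_cnj_if_bounded[OF assms(1) u] by (rule summable_norm_cancel)
  then have S: "(\<lambda>n. c n * cnj (u n)) sums (\<Sum>n. c n * cnj (u n))" by (rule summable_sums)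
  have "Re (\<Sum>n. c n * cnj (u n)) = 0"
    using sums_Re[OF S] assms(3) unfolding l2_inner_re_def by (simp add: sums_iff)
  moreover have "Im (\<Sum>n. c n * cnj (u n)) = 0"
    using sums_Im[OF S] assms(4) unfolding l2_inner_re_def by (simp add: sums_iff)
  ultimately have "(\<Sum>n. c n * cnj (u n)) = 0" by (simp add: complex_eq_iff)
  with S have "(\<lambda>n. cnj (c n * cnj (u n))) sums cnj 0" by (simp only: sums_cnj)
  then show ?thesis by simp
qed

lemma annihilator_if_not_cyclic:
  assumes "l2seq a" and a: "summable (\<lambda>n. cmod (a n))" and "\<not> cyclic_bshift a"
  obtains \<beta> C where "\<And>n. cmod (\<beta> n) \<le> C" and "\<exists>n. \<beta> n \<noteq> 0"
    and "\<And>N. (\<lambda>n. \<beta> n * a (n + N)) sums 0"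
proof -
  define V where "V = cspan (shift_orbit a)"
  have V: "seq.subspace V" "V \<subseteq> Collect l2seq"
    unfolding V_def using l2seq_if_in_span_shift_orbit[OF \<open>l2seq a\<close>]
    by auto
  obtain b e where "l2seq b" "e > 0" and far: "\<And>v. v \<in> V \<Longrightarrow> e \<le> l2norm (\<lambda>n. b n - v n)"
    using assms(1,3) unfolding cyclic_bshift_def V_def by (meson not_less)
  obtain c C where bounded: "\<And>n. cmod (c n) \<le> C" and "\<exists>n. c n \<noteq> 0"
    and orth: "\<And>u. u \<in> V \<Longrightarrow> summable (\<lambda>n. cmod (u n)) \<Longrightarrow> l2_inner_re c u = 0"
    using l2_annihilator[OF V \<open>l2seq b\<close> \<open>e > 0\<close> far] by blast
  show thesis
  proof (rule that[of "\<lambda>n. cnj (c n)" C])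
    show "cmod (cnj (c n)) \<le> C" for n using bounded by simp
    show "\<exists>n. cnj (c n) \<noteq> 0" using \<open>\<exists>n. c n \<noteq> 0\<close> by simp
    fix N
    define u where "u n = a (n + N)" for n
    have "u \<in> V"
      using seq.span_base[OF funpow_bshift_in_shift_orbit[of N a]]
      unfolding V_def u_def funpow_bshift by (simp add: add.commute)
    then have "(\<lambda>n. \<i> * u n) \<in> V"
      using seq.span_scale[of u _ \<i>] unfolding V_def seq_scale_def by blast
    have "summable (\<lambda>n. cmod (u n))"
      using a summable_iff_shift[of "\<lambda>n. cmod (a n)" N] unfolding u_def by simp
    then have "summable (\<lambda>n. cmod (\<i> * u n))" by (simp add: norm_mult)
    have "l2_inner_re c u = 0" "l2_inner_re c (\<lambda>n. \<i> * u n) = 0"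
      by (fact orth[OF \<open>u \<in> V\<close> \<open>summable (\<lambda>n. cmod (u n))\<close>],
          fact orth[OF \<open>(\<lambda>n. \<i> * u n) \<in> V\<close> \<open>summable (\<lambda>n. cmod (\<i> * u n))\<close>])
    with bounded \<open>summable (\<lambda>n. cmod (u n))\<close> have "(\<lambda>n. cnj (c n) * u n) sums 0"
      by (rule sums_cnj_mult_eq_0_if_l2_inner_re_eq_0)
    then show "(\<lambda>n. cnj (c n) * a (n + N)) sums 0" unfolding u_def .
  qed
qed

section \<open>Power series with an annihilated shift orbit\<close>

lemma infsum_eq_suminf_if_summable_norm:
  fixes g :: "nat \<Rightarrow> 'a::banach"
  assumes "summable (\<lambda>n. norm (g n))"
  shows "infsum g UNIV = suminf g"
  by (rule infsumI norm_summable_imp_has_sum[OF assms summable_sums[OF summable_norm_cancel[OF assms]]])+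

lemma infsum_nat_prod_eq_suminf_suminf:
  fixes g :: "nat \<times> nat \<Rightarrow> 'a::banach"
  assumes "(\<lambda>z. norm (g z)) summable_on UNIV"
  shows "infsum g UNIV = (\<Sum>i. \<Sum>j. g (i, j))"
proof -
  have Sigma: "(\<lambda>z. norm (g z)) summable_on UNIV \<times> UNIV" using assms by simp
  have row: "summable (\<lambda>j. norm (g (i, j)))" for i
    using Infinite_Sum.abs_summable_on_Sigma_iff[of g UNIV "\<lambda>_. UNIV"] Sigma
    by (simp add: summable_on_UNIV_nonneg_real_iff)
  have "summable (\<lambda>i. \<Sum>j. norm (g (i, j)))"
    using Infinite_Sum.abs_summable_on_Sigma_iff[of g UNIV "\<lambda>_. UNIV"] Sigma
    by (simp add: summable_on_UNIV_nonneg_real_iff infsum_eq_suminf_if_summable_norm row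
        suminf_nonneg)
  then have "summable (\<lambda>i. norm (\<Sum>j. g (i, j)))"
    by (rule summable_comparison_test'[where N = 0]) (simp add: summable_norm row)
  have "infsum g UNIV = infsum (\<lambda>i. infsum (\<lambda>j. g (i, j)) UNIV) UNIV"
    using infsum_Sigma_banach[OF abs_summable_summable[OF Sigma]] by simp
  also have "\<dots> = infsum (\<lambda>i. \<Sum>j. g (i, j)) UNIV"
    by (simp add: infsum_eq_suminf_if_summable_norm row)
  also have "\<dots> = (\<Sum>i. \<Sum>j. g (i, j))"
    by (rule infsum_eq_suminf_if_summable_norm) fact
  finally show ?thesis .
qed

lemma abs_summable_on_nat_prod_mult:
  fixes p q :: "nat \<Rightarrow> 'a::{banach, real_normed_div_algebra}"
  assumes p: "summable (\<lambda>m. norm (p m))" and q: "summable (\<lambda>n. norm (q n))"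
  shows "(\<lambda>z. norm (p (fst z) * q (snd z))) summable_on UNIV"
proof -
  have q': "(\<lambda>n. norm (q n)) summable_on UNIV" using q by (simp add: summable_on_UNIV_nonneg_real_iff)
  have p': "(\<lambda>m. norm (p m)) summable_on UNIV" using p by (simp add: summable_on_UNIV_nonneg_real_iff)
  have "(\<lambda>z. norm (p (fst z) * q (snd z))) summable_on UNIV \<times> UNIV"
  proof (subst Infinite_Sum.abs_summable_on_Sigma_iff, intro conjI ballI)
    show "(\<lambda>n. norm (p (fst (m, n)) * q (snd (m, n)))) summable_on UNIV" for m
      using summable_on_cmult_right[OF q', of "norm (p m)"] by (simp add: norm_mult)
    have "infsum (\<lambda>n. norm (p (fst (m, n)) * q (snd (m, n)))) UNIV
        = norm (p m) * infsum (\<lambda>n. norm (q n)) UNIV" for m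
      by (simp add: norm_mult infsum_cmult_right')
    moreover have "(\<lambda>m. norm (norm (p m) * infsum (\<lambda>n. norm (q n)) UNIV)) summable_on UNIV"
      using summable_on_cmult_left[OF p'] by (simp add: abs_mult infsum_nonneg)
    ultimately show "(\<lambda>m. norm (infsum (\<lambda>n. norm (p (fst (m, n)) * q (snd (m, n)))) UNIV))
        summable_on UNIV"
      by simp
  qed
  then show ?thesis by simp
qed

lemma infsum_nat_prod_diagonal_split:
  fixes g :: "nat \<times> nat \<Rightarrow> 'a::banach"
  assumes "(\<lambda>z. norm (g z)) summable_on UNIV"
  shows "infsum g UNIV = (\<Sum>k. \<Sum>m. g (m, m + k)) + (\<Sum>j. \<Sum>n. g (n + Suc j, n))"
proof -
  define P1 P2 where "P1 = {z::nat \<times> nat. fst z \<le> snd z}" and "P2 = {z::nat \<times> nat. snd z < fst z}"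
  have P1: "bij_betw (\<lambda>(k, m). (m, m + k)) UNIV P1"
    by (rule bij_betwI[where g = "\<lambda>(m, n). (n - m, m)"]) (auto simp: P1_def)
  have P2: "bij_betw (\<lambda>(j, n). (n + Suc j, n)) UNIV P2"
    by (rule bij_betwI[where g = "\<lambda>(m, n). (m - n - 1, n)"]) (auto simp: P2_def)
  have part: "infsum g P = (\<Sum>i. \<Sum>j. g (h (i, j)))" if h: "bij_betw h UNIV P" for h P
  proof -
    have "(\<lambda>z. norm (g z)) summable_on P" using summable_on_subset_banach[OF assms] by blast
    then have "(\<lambda>z. norm (g (h z))) summable_on UNIV"
      using summable_on_reindex_bij_betw[OF h, of "\<lambda>z. norm (g z)"] by simp
    have "infsum g P = infsum (\<lambda>z. g (h z)) UNIV"
      by (rule infsum_reindex_bij_betw[OF h, symmetric])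
    also have "\<dots> = (\<Sum>i. \<Sum>j. g (h (i, j)))"
      by (rule infsum_nat_prod_eq_suminf_suminf) fact
    finally show ?thesis .
  qed
  have g: "g summable_on UNIV" using assms by (rule abs_summable_summable)
  have "infsum g (P1 \<union> P2) = infsum g P1 + infsum g P2"
    by (rule infsum_Un_disjoint[OF summable_on_subset_banach[OF g] summable_on_subset_banach[OF g]])
      (auto simp: P1_def P2_def)
  moreover have "P1 \<union> P2 = UNIV" unfolding P1_def P2_def by auto
  ultimately have "infsum g UNIV = infsum g P1 + infsum g P2" by simp
  then show ?thesis using part[OF P1] part[OF P2] by simp
qed

text \<open>Splitting the double series along the diagonal, the terms with negative powers of
  \<open>w\<close> sum to zero because \<open>\<beta>\<close> annihilates every shift of \<open>a\<close>.\<close>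

lemma suminf_product_if_annihilated:
  fixes a \<beta> :: "nat \<Rightarrow> complex" and x w :: complex
  assumes ax: "summable (\<lambda>n. norm (a n * x ^ n))" and a: "summable (\<lambda>n. norm (a n))"
    and \<beta>: "\<And>n. cmod (\<beta> n) \<le> C" and "cmod w < 1" and "x * w = 1"
    and annihilated: "\<And>N. (\<lambda>n. \<beta> n * a (n + N)) sums 0"
  shows "(\<Sum>n. a n * x ^ n) * (\<Sum>n. \<beta> n * w ^ n) = (\<Sum>k. (\<Sum>m. a m * \<beta> (m + k)) * w ^ k)"
proof -
  have \<beta>w: "summable (\<lambda>n. norm (\<beta> n * w ^ n))"
  proof (rule summable_comparison_test'[where N = 0])
    show "summable (\<lambda>n. C * cmod w ^ n)" using \<open>cmod w < 1\<close> by (simp add: summable_mult)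
    show "norm (norm (\<beta> n * w ^ n)) \<le> C * cmod w ^ n" for n
      using \<beta> by (simp add: norm_mult norm_power mult_right_mono)
  qed
  have a\<beta>: "summable (\<lambda>m. a m * \<beta> (m + k))" for k
  proof (rule summable_norm_cancel, rule summable_comparison_test'[where N = 0])
    show "summable (\<lambda>m. norm (a m) * C)" using a by (rule summable_mult2)
    show "norm (norm (a m * \<beta> (m + k))) \<le> norm (a m) * C" for m
      using \<beta> by (simp add: norm_mult mult_left_mono)
  qed
  have "x ^ m * w ^ m = 1" for m using \<open>x * w = 1\<close> by (simp add: power_mult_distrib[symmetric])
  then have diag: "a m * x ^ m * (\<beta> (m + k) * w ^ (m + k)) = a m * \<beta> (m + k) * w ^ k"
    and subdiag: "a (n + Suc j) * x ^ (n + Suc j) * (\<beta> n * w ^ n) = \<beta> n * a (n + Suc j) * x ^ Suc j"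
    for m k n j
    by (simp_all add: power_add algebra_simps)
  define f where "f = (\<lambda>z. a (fst z) * x ^ fst z * (\<beta> (snd z) * w ^ snd z))"
  have f: "(\<lambda>z. norm (f z)) summable_on UNIV"
    unfolding f_def using abs_summable_on_nat_prod_mult[OF ax \<beta>w] by simp
  have "(\<Sum>n. a n * x ^ n) * (\<Sum>n. \<beta> n * w ^ n) = infsum f UNIV"
    using infsum_nat_prod_eq_suminf_suminf[OF f]
      suminf_mult[OF summable_norm_cancel[OF \<beta>w]] suminf_mult2[OF summable_norm_cancel[OF ax]]
    by (simp add: f_def)
  also have "\<dots> = (\<Sum>k. \<Sum>m. a m * \<beta> (m + k) * w ^ k) + (\<Sum>j. \<Sum>n. \<beta> n * a (n + Suc j) * x ^ Suc j)"
    unfolding infsum_nat_prod_diagonal_split[OF f] by (simp only: f_def fst_conv snd_conv diag subdiag)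
  also have "\<dots> = (\<Sum>k. (\<Sum>m. a m * \<beta> (m + k)) * w ^ k)"
  proof -
    have "(\<lambda>n. \<beta> n * a (n + Suc j) * x ^ Suc j) sums 0" for j
      using sums_mult2[OF annihilated[of "Suc j"], of "x ^ Suc j"] by simp
    then have "(\<Sum>n. \<beta> n * a (n + Suc j) * x ^ Suc j) = 0" for j
      by (rule sums_unique[symmetric])
    then show ?thesis
      by (simp only: suminf_mult2[OF a\<beta>, symmetric] suminf_zero add_0_right)
  qed
  finally show ?thesis .
qed

lemma norm_suminf_mult_le_if_bounded:
  fixes a \<beta> :: "nat \<Rightarrow> complex"
  assumes a: "summable (\<lambda>n. norm (a n))" and \<beta>: "\<And>n. cmod (\<beta> n) \<le> C"
  shows "cmod (\<Sum>n. a n * \<beta> n) \<le> (\<Sum>n. norm (a n)) * C"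
proof -
  have aC: "summable (\<lambda>n. norm (a n) * C)" using a by (rule summable_mult2)
  have pointwise: "norm (a n * \<beta> n) \<le> norm (a n) * C" for n
    using \<beta> by (simp add: norm_mult mult_left_mono)
  have "summable (\<lambda>n. norm (a n * \<beta> n))"
    using aC by (rule summable_comparison_test'[where N = 0]) (simp add: pointwise)
  then have "cmod (\<Sum>n. a n * \<beta> n) \<le> (\<Sum>n. norm (a n * \<beta> n))"
    by (rule summable_norm)
  also have "\<dots> \<le> (\<Sum>n. norm (a n) * C)"
    using pointwise \<open>summable (\<lambda>n. norm (a n * \<beta> n))\<close> aC by (rule suminf_le)
  also have "\<dots> = (\<Sum>n. norm (a n)) * C"
    using a by (rule suminf_mult2[symmetric])
  finally show ?thesis .
qed

lemma fps_conv_radius_ge_1_if_bounded: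
  fixes c :: "nat \<Rightarrow> complex"
  assumes "\<And>n. cmod (c n) \<le> C"
  shows "fps_conv_radius (Abs_fps c) \<ge> 1"
  unfolding fps_conv_radius_def
proof (rule conv_radius_geI_ex')
  fix r :: real assume "0 < r" "ereal r < 1"
  show "summable (\<lambda>n. fps_nth (Abs_fps c) n * of_real r ^ n)"
  proof (rule summable_norm_cancel, rule summable_comparison_test'[where N = 0])
    show "summable (\<lambda>n. C * r ^ n)"
      using \<open>0 < r\<close> \<open>ereal r < 1\<close> by (intro summable_mult summable_geometric) simp
    show "norm (norm (fps_nth (Abs_fps c) n * of_real r ^ n)) \<le> C * r ^ n" for n
      using assms \<open>0 < r\<close> by (simp add: norm_mult norm_power mult_right_mono)
  qed
qed

lemma exists_eval_fps_nonzero: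
  fixes F :: "complex fps"
  assumes "F \<noteq> 0" and "0 < r" and "ereal r \<le> fps_conv_radius F"
  shows "\<exists>w\<in>ball 0 r. eval_fps F w \<noteq> 0"
proof (rule ccontr)
  assume "\<not> (\<exists>w\<in>ball 0 r. eval_fps F w \<noteq> 0)"
  then have "\<forall>\<^sub>F z in nhds 0. eval_fps F z = eval_fps 0 z"
    using eventually_nhds_in_open[of "ball 0 r" 0] \<open>0 < r\<close> by (auto elim!: eventually_mono)
  moreover have "fps_conv_radius F > 0"
    using assms(2,3) by (simp add: order.strict_trans2[rotated])
  ultimately have "F = 0" by (intro eval_fps_eqD) auto
  with \<open>F \<noteq> 0\<close> show False ..
qed

lemma fps_coeff_eq_0_if_poly_times_eq_poly:
  fixes a :: "nat \<Rightarrow> complex" and R :: "complex poly"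
  assumes "\<rho> > 0" and radius: "ereal \<rho> \<le> fps_conv_radius (Abs_fps a)"
    and eq: "\<And>z. cmod z < \<rho> \<Longrightarrow> poly R z * eval_fps (Abs_fps a) z = (\<Sum>k\<le>d. c k * z ^ k)"
    and "n > d"
  shows "(\<Sum>i=0..n. coeff R i * a (n - i)) = 0"
proof -
  define P where "P = fps_of_poly R * Abs_fps a"
  define T where "T = fps_of_poly (\<Sum>k\<le>d. monom (c k) k)"
  have "ereal \<rho> \<le> fps_conv_radius P"
    using fps_conv_radius_mult[of "fps_of_poly R" "Abs_fps a"] radius by (simp add: P_def)
  then have "fps_conv_radius P > 0" using \<open>\<rho> > 0\<close> by (simp add: order.strict_trans2[rotated])
  moreover have "fps_conv_radius T > 0" by (simp add: T_def)
  moreover have "\<forall>\<^sub>F z in nhds 0. eval_fps P z = eval_fps T z"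
  proof -
    have "\<forall>\<^sub>F z in nhds 0. z \<in> ball (0::complex) \<rho>"
      using \<open>\<rho> > 0\<close> by (intro eventually_nhds_in_open) auto
    then show ?thesis
    proof (rule eventually_mono)
      fix z :: complex assume "z \<in> ball 0 \<rho>"
      then have "ereal (cmod z) < ereal \<rho>" by simp
      then have "ereal (cmod z) < fps_conv_radius (Abs_fps a)"
        using radius by (rule order.strict_trans2)
      then have "eval_fps P z = poly R z * eval_fps (Abs_fps a) z"
        by (simp add: P_def eval_fps_mult)
      also have "\<dots> = eval_fps T z"
        using eq \<open>z \<in> ball 0 \<rho>\<close> by (simp add: T_def poly_sum poly_monom)
      finally show "eval_fps P z = eval_fps T z" .
    qed
  qed
  ultimately have "P = T" by (rule eval_fps_eqD)
  moreover have "fps_nth T n = 0" using \<open>n > d\<close> by (simp add: T_def coeff_sum)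
  ultimately have "fps_nth P n = 0" by simp
  then show ?thesis by (simp add: P_def fps_mult_nth)
qed

text \<open>\<open>reflect_poly Q\<close> lists the coefficients of \<open>Q\<close> in reverse order, so its vanishing
  products with \<open>a\<close> in degrees above \<open>degree Q\<close> are a recurrence with coefficients
  \<open>coeff Q\<close>.\<close>

lemma linear_recurrent_if_reflect_poly_times_eq_poly:
  fixes a :: "nat \<Rightarrow> complex" and Q :: "complex poly"
  assumes "Q \<noteq> 0" and "\<rho> > 0" and "ereal \<rho> \<le> fps_conv_radius (Abs_fps a)"
    and "\<And>z. cmod z < \<rho> \<Longrightarrow>
      poly (reflect_poly Q) z * eval_fps (Abs_fps a) z = (\<Sum>k\<le>degree Q. c k * z ^ k)"
  shows "linear_recurrent a"
proof (rule linear_recurrentI_eventually[where N = 1])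
  show "coeff Q (degree Q) \<noteq> 0" using \<open>Q \<noteq> 0\<close> by simp
  fix m :: nat assume "1 \<le> m"
  define d where "d = degree Q"
  have "(\<Sum>i=0..m + d. coeff (reflect_poly Q) i * a (m + d - i)) = 0"
    using fps_coeff_eq_0_if_poly_times_eq_poly[OF assms(2-4), of "m + d"] \<open>1 \<le> m\<close>
    by (simp add: d_def)
  also have "(\<Sum>i=0..m + d. coeff (reflect_poly Q) i * a (m + d - i))
      = (\<Sum>i=0..d. coeff Q (d - i) * a (m + d - i))"
    by (rule sum.mono_neutral_cong_right) (auto simp: d_def coeff_reflect_poly)
  also have "\<dots> = (\<Sum>j=0..d. coeff Q j * a (m + j))"
    by (rule sum.reindex_bij_witness[where i = "\<lambda>j. d - j" and j = "\<lambda>i. d - i"]) auto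
  finally show "(\<Sum>j\<le>degree Q. coeff Q j * a (m + j)) = 0"
    by (simp add: d_def atLeast0AtMost)
qed

section \<open>Meromorphic continuation and Liouville\<close>

lemma holomorphic_divide_out_zero:
  fixes f :: "complex \<Rightarrow> complex"
  assumes holo: "f holomorphic_on S" and S: "open S" "connected S"
    and "z0 \<in> S" "f z0 = 0" and nonconst: "\<not> f constant_on S"
  obtains m g where "m > 0" and "g holomorphic_on S" and "g z0 \<noteq> 0"
    and "\<And>w. w \<in> S \<Longrightarrow> f w = (w - z0) ^ m * g w"
proof -
  obtain g r m where "0 < m" "0 < r" "ball z0 r \<subseteq> S" and g: "g holomorphic_on ball z0 r"
    and fg: "\<And>w. w \<in> ball z0 r \<Longrightarrow> f w = (w - z0) ^ m * g w"
    and "\<And>w. w \<in> ball z0 r \<Longrightarrow> g w \<noteq> 0"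
    by (rule holomorphic_factor_zero_nonconstant[OF holo S \<open>z0 \<in> S\<close> \<open>f z0 = 0\<close> nonconst]) blast
  define h where "h = (\<lambda>w. if w = z0 then g z0 else f w / (w - z0) ^ m)"
  have "(\<lambda>w. f w / (w - z0) ^ m) holomorphic_on S - {z0}"
    by (intro holomorphic_intros holomorphic_on_subset[OF holo]) auto
  moreover have "(\<lambda>w. f w / (w - z0) ^ m) \<midarrow>z0\<rightarrow> g z0"
  proof (rule Lim_transform_eventually)
    show "g \<midarrow>z0\<rightarrow> g z0"
      using holomorphic_on_imp_continuous_on[OF g] \<open>0 < r\<close>
      by (simp add: continuous_on_eq_continuous_at isCont_def)
    show "\<forall>\<^sub>F w in at z0. g w = f w / (w - z0) ^ m"
      using eventually_at_ball'[OF \<open>0 < r\<close>, of z0 UNIV] by eventually_elim (simp add: fg)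
  qed
  ultimately have "h holomorphic_on S"
    unfolding h_def by (rule removable_singularity[OF _ S(1)])
  moreover have "f w = (w - z0) ^ m * h w" if "w \<in> S" for w
    using \<open>f z0 = 0\<close> \<open>0 < m\<close> by (cases "w = z0") (auto simp: h_def)
  moreover have "h z0 \<noteq> 0"
    using \<open>\<And>w. w \<in> ball z0 r \<Longrightarrow> g w \<noteq> 0\<close> \<open>0 < r\<close> by (simp add: h_def)
  ultimately show thesis using \<open>0 < m\<close> by (intro that)
qed

lemma holomorphic_factor_zeros_in_compact:
  fixes f :: "complex \<Rightarrow> complex"
  assumes holo: "f holomorphic_on S" and S: "open S" "connected S"
    and K: "compact K" "K \<subseteq> S" and nonzero: "\<exists>w\<in>S. f w \<noteq> 0"
  obtains Q g where "Q \<noteq> 0" and "g holomorphic_on S"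
    and "\<And>w. w \<in> S \<Longrightarrow> f w = poly Q w * g w" and "\<And>w. w \<in> K \<Longrightarrow> g w \<noteq> 0"
proof -
  define n where "n = card {z\<in>K. f z = 0}"
  have "\<exists>Q g. Q \<noteq> 0 \<and> g holomorphic_on S \<and> (\<forall>w\<in>S. f w = poly Q w * g w) \<and> (\<forall>w\<in>K. g w \<noteq> 0)"
    using holo nonzero n_def
  proof (induction n arbitrary: f rule: less_induct)
    case (less n f)
    show ?case
    proof (cases "\<exists>z0\<in>K. f z0 = 0")
      case False
      then show ?thesis using less.prems(1) by (intro exI[of _ 1] exI[of _ f]) auto
    next
      case True
      then obtain z0 where "z0 \<in> K" "f z0 = 0" by blast
      have nonconst: "\<not> f constant_on S"
        using less.prems(2) \<open>z0 \<in> K\<close> \<open>f z0 = 0\<close> K(2) unfolding constant_on_def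
        by (metis subsetD)
      obtain m g where "m > 0" and g: "g holomorphic_on S" and "g z0 \<noteq> 0"
        and fg: "\<And>w. w \<in> S \<Longrightarrow> f w = (w - z0) ^ m * g w"
        using holomorphic_divide_out_zero[OF less.prems(1) S _ \<open>f z0 = 0\<close> nonconst] \<open>z0 \<in> K\<close> K(2)
        by blast
      have "finite {z\<in>K. f z = 0}"
        by (rule holomorphic_compact_finite_zeros[OF less.prems(1) S K nonconst])
      then have "card ({z\<in>K. f z = 0} - {z0}) < n"
        unfolding less.prems(3) using \<open>z0 \<in> K\<close> \<open>f z0 = 0\<close> by (intro card_Diff1_less) auto
      moreover have "{z\<in>K. g z = 0} = {z\<in>K. f z = 0} - {z0}"
        using fg K(2) \<open>g z0 \<noteq> 0\<close> by auto
      ultimately have "card {z\<in>K. g z = 0} < n" by simp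
      moreover have "\<exists>w\<in>S. g w \<noteq> 0" using \<open>g z0 \<noteq> 0\<close> \<open>z0 \<in> K\<close> K(2) by blast
      ultimately obtain Q h where "Q \<noteq> 0" "h holomorphic_on S"
        and gh: "\<forall>w\<in>S. g w = poly Q w * h w" and "\<forall>w\<in>K. h w \<noteq> 0"
        using less.IH[OF _ g _ refl] by blast
      moreover have "\<forall>w\<in>S. f w = poly ([:- z0, 1:] ^ m * Q) w * h w"
        using fg gh by (simp add: poly_power)
      ultimately show ?thesis using \<open>Q \<noteq> 0\<close> by (intro exI[of _ "[:- z0, 1:] ^ m * Q"] exI[of _ h]) simp
    qed
  qed
  then show thesis using that by metis
qed

lemma norm_le_power_at_infinity_if_holomorphic_at_0:
  fixes G :: "complex \<Rightarrow> complex"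
  assumes G: "G holomorphic_on ball 0 r" and "0 < \<rho>" and "1 / \<rho> < r"
  obtains M where "\<And>z. \<rho> \<le> cmod z \<Longrightarrow> norm (z ^ d * G (1 / z)) \<le> M * cmod z ^ d"
proof -
  have "cball 0 (1 / \<rho>) \<subseteq> ball 0 r" using \<open>1 / \<rho> < r\<close> by auto
  then have "compact (G ` cball 0 (1 / \<rho>))"
    by (intro compact_continuous_image holomorphic_on_imp_continuous_on
        holomorphic_on_subset[OF G] compact_cball)
  then obtain M where M: "\<And>w. w \<in> cball 0 (1 / \<rho>) \<Longrightarrow> norm (G w) \<le> M"
    by (meson bounded_iff compact_imp_bounded imageI)
  show thesis
  proof (rule that)
    fix z assume "\<rho> \<le> cmod z"
    then have "1 / z \<in> cball 0 (1 / \<rho>)"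
      using \<open>0 < \<rho>\<close> by (simp add: norm_divide divide_simps)
    then have "norm (G (1 / z)) \<le> M" by (rule M)
    then have "cmod z ^ d * norm (G (1 / z)) \<le> cmod z ^ d * M" by (simp add: mult_left_mono)
    then show "norm (z ^ d * G (1 / z)) \<le> M * cmod z ^ d"
      by (simp add: norm_mult norm_power mult.commute)
  qed
qed

lemma polynomial_if_holomorphic_at_infinity:
  fixes P G :: "complex \<Rightarrow> complex"
  assumes P: "P holomorphic_on ball 0 R" and G: "G holomorphic_on ball 0 r"
    and "r > 0" and "1 / r < R"
    and PG: "\<And>z. 1 / r < cmod z \<Longrightarrow> cmod z < R \<Longrightarrow> P z = z ^ d * G (1 / z)"
  obtains c where "\<And>z. cmod z < R \<Longrightarrow> P z = (\<Sum>k\<le>d. c k * z ^ k)"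
proof -
  obtain \<rho> where "1 / r < \<rho>" "\<rho> < R" using dense[OF \<open>1 / r < R\<close>] by blast
  moreover have "0 < 1 / r" using \<open>r > 0\<close> by simp
  ultimately have \<rho>: "1 / r < \<rho>" "\<rho> < R" "0 < \<rho>" by linarith+
  then have "1 / \<rho> < r" using \<open>r > 0\<close> by (simp add: field_simps)
  define F where "F z = (if cmod z < \<rho> then P z else z ^ d * G (1 / z))" for z
  have F_outer: "F z = z ^ d * G (1 / z)" if "\<rho> \<le> cmod z" for z
    using that by (simp add: F_def)
  have F_P: "F z = P z" if "cmod z < R" for z
    using that \<rho> by (cases "cmod z < \<rho>") (auto simp: F_def PG)
  have inverse_in_ball: "1 / z \<in> ball 0 r" if "\<rho> \<le> cmod z" for z
  proof -
    have "cmod (1 / z) \<le> 1 / \<rho>"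
      using that \<rho>(3) by (simp add: norm_divide divide_simps)
    also have "\<dots> < r" by fact
    finally show ?thesis by simp
  qed
  have "F holomorphic_on ball 0 R \<union> - cball 0 \<rho>"
  proof (rule holomorphic_on_Un)
    show "F holomorphic_on ball 0 R" using P by (rule holomorphic_transform) (simp add: F_P)
    have "(\<lambda>z. G (1 / z)) holomorphic_on - cball 0 \<rho>"
      using holomorphic_on_compose_gen[OF _ G, of "\<lambda>z. 1 / z" "- cball 0 \<rho>"] inverse_in_ball \<rho>(3)
      by (force simp: o_def intro!: holomorphic_intros)
    then have "(\<lambda>z. z ^ d * G (1 / z)) holomorphic_on - cball 0 \<rho>"
      by (intro holomorphic_intros)
    then show "F holomorphic_on - cball 0 \<rho>"
      by (rule holomorphic_transform) (simp add: F_outer)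
  qed auto
  moreover have "ball 0 R \<union> - cball 0 \<rho> = UNIV" using \<rho>(2) by auto
  ultimately have entire: "F holomorphic_on UNIV" by metis
  obtain M where M: "\<And>z. \<rho> \<le> cmod z \<Longrightarrow> norm (z ^ d * G (1 / z)) \<le> M * cmod z ^ d"
    using norm_le_power_at_infinity_if_holomorphic_at_0[OF G \<rho>(3) \<open>1 / \<rho> < r\<close>] by blast
  then have "norm (F z) \<le> M * cmod z ^ d" if "\<rho> \<le> cmod z" for z
    using F_outer[OF that] M[OF that] by simp
  with entire have F: "F z = (\<Sum>k\<le>d. (deriv ^^ k) F 0 / fact k * z ^ k)" for z
    by (rule Liouville_polynomial)
  show thesis
  proof (rule that)
    fix z :: complex assume "cmod z < R"
    then show "P z = (\<Sum>k\<le>d. (deriv ^^ k) F 0 / fact k * z ^ k)"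
      using F[of z] F_P[of z] by simp
  qed
qed

lemma reflect_poly_times_eq_poly_if_product_identity:
  fixes A B \<Psi> :: "complex \<Rightarrow> complex"
  assumes "\<rho> > 1" and A: "A holomorphic_on ball 0 \<rho>"
    and B: "B holomorphic_on ball 0 1" and \<Psi>: "\<Psi> holomorphic_on ball 0 1"
    and "\<exists>w\<in>ball 0 1. B w \<noteq> 0"
    and product: "\<And>z. 1 < cmod z \<Longrightarrow> cmod z < \<rho> \<Longrightarrow> A z * B (1 / z) = \<Psi> (1 / z)"
  obtains Q c where "Q \<noteq> 0"
    and "\<And>z. cmod z < \<rho> \<Longrightarrow> poly (reflect_poly Q) z * A z = (\<Sum>k\<le>degree Q. c k * z ^ k)"
proof -
  define r where "r = (1 / \<rho> + 1) / 2"
  have r: "1 / \<rho> < r" "r < 1" "0 < r"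
    using \<open>\<rho> > 1\<close> by (auto simp: r_def field_simps)
  obtain Q \<Gamma> where "Q \<noteq> 0" and \<Gamma>: "\<Gamma> holomorphic_on ball 0 1"
    and BQ: "\<And>w. w \<in> ball 0 1 \<Longrightarrow> B w = poly Q w * \<Gamma> w"
    and \<Gamma>_nonzero: "\<And>w. w \<in> cball 0 r \<Longrightarrow> \<Gamma> w \<noteq> 0"
  proof -
    have "cball 0 r \<subseteq> ball (0::complex) 1" using \<open>r < 1\<close> by auto
    then show thesis
      using holomorphic_factor_zeros_in_compact[OF B open_ball connected_ball compact_cball
          _ \<open>\<exists>w\<in>ball 0 1. B w \<noteq> 0\<close>] that by blast
  qed
  define G where "G w = \<Psi> w / \<Gamma> w" for w
  have "G holomorphic_on ball 0 r"
    unfolding G_def using r \<Gamma>_nonzero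
    by (intro holomorphic_intros holomorphic_on_subset[OF \<Psi>] holomorphic_on_subset[OF \<Gamma>]) auto
  have "1 / r < \<rho>" using r \<open>\<rho> > 1\<close> by (simp add: field_simps)
  have "poly (reflect_poly Q) z * A z = z ^ degree Q * G (1 / z)"
    if "1 / r < cmod z" "cmod z < \<rho>" for z
  proof -
    have "1 < 1 / r" using r by simp
    then have "1 < cmod z" "z \<noteq> 0" using that by auto
    have "cmod (1 / z) < r"
      using that \<open>1 < cmod z\<close> r by (simp add: norm_divide divide_less_eq field_simps)
    then have w: "1 / z \<in> ball 0 1" "1 / z \<in> cball 0 r" using r by auto
    have "A z * poly Q (1 / z) * \<Gamma> (1 / z) = \<Psi> (1 / z)"
      using product[OF \<open>1 < cmod z\<close> \<open>cmod z < \<rho>\<close>] BQ[OF w(1)] by (simp add: mult.assoc)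
    then have "A z * poly Q (1 / z) = G (1 / z)"
      using \<Gamma>_nonzero[OF w(2)] by (simp add: G_def field_simps)
    then show ?thesis
      using poly_reflect_poly_nz[OF \<open>z \<noteq> 0\<close>, of Q] by (simp add: inverse_eq_divide algebra_simps)
  qed
  moreover have "(\<lambda>z. poly (reflect_poly Q) z * A z) holomorphic_on ball 0 \<rho>"
    using A by (intro holomorphic_intros)
  ultimately obtain c where
    "\<And>z. cmod z < \<rho> \<Longrightarrow> poly (reflect_poly Q) z * A z = (\<Sum>k\<le>degree Q. c k * z ^ k)"
    using polynomial_if_holomorphic_at_infinity[OF _ \<open>G holomorphic_on ball 0 r\<close> \<open>0 < r\<close>
        \<open>1 / r < \<rho>\<close>] by blast
  with \<open>Q \<noteq> 0\<close> show thesis by (rule that)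
qed

section \<open>Exponentially decaying sequences\<close>

lemma linear_recurrent_if_annihilated:
  fixes a \<beta> :: "nat \<Rightarrow> complex"
  assumes "\<rho> > 1" and decay: "summable (\<lambda>n. cmod (a n) * \<rho> ^ n)"
    and \<beta>: "\<And>n. cmod (\<beta> n) \<le> C" "\<exists>n. \<beta> n \<noteq> 0"
    and annihilated: "\<And>N. (\<lambda>n. \<beta> n * a (n + N)) sums 0"
  shows "linear_recurrent a"
proof -
  have a_decay: "summable (\<lambda>n. norm (a n * z ^ n))" if "cmod z \<le> \<rho>" for z
  proof (rule summable_comparison_test'[where N = 0, OF decay])
    show "norm (norm (a n * z ^ n)) \<le> cmod (a n) * \<rho> ^ n" for n
      using that by (simp add: norm_mult norm_power mult_left_mono power_mono)
  qed
  have a: "summable (\<lambda>n. norm (a n))"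
    using a_decay[of 1] \<open>\<rho> > 1\<close> by simp
  define \<phi> where "\<phi> k = (\<Sum>m. a m * \<beta> (m + k))" for k
  have \<phi>_bounded: "cmod (\<phi> k) \<le> (\<Sum>m. norm (a m)) * C" for k
    unfolding \<phi>_def using a \<beta>(1) by (rule norm_suminf_mult_le_if_bounded)
  have radius_A: "ereal \<rho> \<le> fps_conv_radius (Abs_fps a)"
    using conv_radius_geI[OF summable_norm_cancel[OF a_decay[of "of_real \<rho>"]]] \<open>\<rho> > 1\<close>
    by (simp add: fps_conv_radius_def)
  have radius_B: "ereal 1 \<le> fps_conv_radius (Abs_fps \<beta>)"
    using fps_conv_radius_ge_1_if_bounded[OF \<beta>(1)] by (simp add: one_ereal_def)
  have radius_\<Psi>: "ereal 1 \<le> fps_conv_radius (Abs_fps \<phi>)"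
    using fps_conv_radius_ge_1_if_bounded[OF \<phi>_bounded] by (simp add: one_ereal_def)
  have "\<exists>w\<in>ball 0 1. eval_fps (Abs_fps \<beta>) w \<noteq> 0"
    using \<beta>(2) radius_B by (intro exists_eval_fps_nonzero) (auto simp: fps_eq_iff)
  moreover have "eval_fps (Abs_fps a) z * eval_fps (Abs_fps \<beta>) (1 / z) = eval_fps (Abs_fps \<phi>) (1 / z)"
    if "1 < cmod z" "cmod z < \<rho>" for z
  proof -
    have "cmod (1 / z) < 1" using that by (simp add: norm_divide divide_less_eq)
    moreover have "z * (1 / z) = 1" using that by auto
    ultimately show ?thesis
      using suminf_product_if_annihilated[OF a_decay[OF less_imp_le[OF that(2)]] a \<beta>(1) _ _
          annihilated]
      by (simp add: \<phi>_def eval_fps_def)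
  qed
  ultimately obtain Q c where "Q \<noteq> 0" and
    "\<And>z. cmod z < \<rho> \<Longrightarrow>
      poly (reflect_poly Q) z * eval_fps (Abs_fps a) z = (\<Sum>k\<le>degree Q. c k * z ^ k)"
    using reflect_poly_times_eq_poly_if_product_identity[OF \<open>\<rho> > 1\<close>
        holomorphic_on_eval_fps[OF ball_eball_mono[OF radius_A]]
        holomorphic_on_eval_fps[OF ball_eball_mono[OF radius_B]]
        holomorphic_on_eval_fps[OF ball_eball_mono[OF radius_\<Psi>]]] by blast
  then show ?thesis
    using linear_recurrent_if_reflect_poly_times_eq_poly[OF \<open>Q \<noteq> 0\<close> _ radius_A] \<open>\<rho> > 1\<close> by simp
qed

lemma cyclic_iff_infinite_dim_span_if_exp_decay:
  fixes a :: "nat \<Rightarrow> complex"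
  assumes "\<rho> > 1" and decay: "summable (\<lambda>n. cmod (a n) * \<rho> ^ n)"
  shows "infinite_dim_span (shift_orbit a) \<longleftrightarrow> cyclic_bshift a"
proof
  assume "cyclic_bshift a"
  then show "infinite_dim_span (shift_orbit a)"
    using not_cyclic_if_linear_recurrent infinite_dim_span_shift_orbit_iff by blast
next
  assume "infinite_dim_span (shift_orbit a)"
  have a: "summable (\<lambda>n. cmod (a n))"
  proof (rule summable_comparison_test'[where N = 0, OF decay])
    show "norm (cmod (a n)) \<le> cmod (a n) * \<rho> ^ n" for n
      using \<open>\<rho> > 1\<close> by (simp add: mult_le_cancel_left1 one_le_power)
  qed
  show "cyclic_bshift a"
  proof (rule ccontr)
    assume "\<not> cyclic_bshift a"
    then obtain \<beta> C where "\<And>n. cmod (\<beta> n) \<le> C" "\<exists>n. \<beta> n \<noteq> 0"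
      "\<And>N. (\<lambda>n. \<beta> n * a (n + N)) sums 0"
      using annihilator_if_not_cyclic[OF l2seq_if_summable_norm[OF a] a] by blast
    then have "linear_recurrent a"
      by (rule linear_recurrent_if_annihilated[OF \<open>\<rho> > 1\<close> decay])
    with \<open>infinite_dim_span (shift_orbit a)\<close> show False
      using infinite_dim_span_shift_orbit_iff by blast
  qed
qed

section \<open>The diagonal coefficients of the equation\<close>

lemma summable_comparison_reindex:
  fixes g :: "'a \<Rightarrow> real" and h :: "nat \<Rightarrow> 'a"
  assumes "g summable_on UNIV" and "inj h" and "\<And>n. 0 \<le> f n" and "\<And>n. f n \<le> g (h n)"
  shows "summable f"
proof -
  have "g summable_on range h" using assms(1) by (rule summable_on_subset_banach) simp
  then have "(g \<circ> h) summable_on UNIV" by (rule summable_on_reindex[OF assms(2), THEN iffD1])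
  moreover have "0 \<le> (g \<circ> h) n" for n using order_trans[OF assms(3,4)] by simp
  ultimately have "summable (g \<circ> h)" using summable_on_UNIV_nonneg_real_iff by blast
  then show ?thesis
    by (rule summable_comparison_test'[where N = 0]) (use assms(3,4) in simp)
qed

lemma norm_diag_le_norm:
  fixes M :: "complex^'m^'m"
  shows "cmod (M $ k $ k) \<le> norm M"
  using Finite_Cartesian_Product.norm_nth_le[of "M $ k" k]
    Finite_Cartesian_Product.norm_nth_le[of M k]
  by linarith

lemma summable_diag_exp_decay:
  fixes A :: "int \<Rightarrow> real \<Rightarrow> complex^'m^'m" and Atil :: "int \<Rightarrow> complex^'m^'m"
  assumes "HA eta r A" and "Hb r A K Kc Atil Ktil" and "eta > 0"
    and "inj h" and h: "\<And>n. \<bar>h n\<bar> = Kc + int n"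
  shows "summable (\<lambda>n. cmod (Atil (h n) $ k $ k) * exp eta ^ n)"
proof (rule summable_comparison_reindex[OF _ \<open>inj h\<close>])
  show "(\<lambda>j. (SUP t. norm (A j t)) * exp (eta * \<bar>r j\<bar>)) summable_on UNIV"
    using assms(1) unfolding HA_def by blast
  fix n
  show "0 \<le> cmod (Atil (h n) $ k $ k) * exp eta ^ n" by simp
  have "Kc \<ge> 1" and r: "r (h n) = of_int (h n)" and A: "A (h n) t = Atil (h n)" for t
    using assms(2) h[of n] unfolding Hb_def by auto
  have "exp eta ^ n = exp (eta * real n)"
    by (simp add: exp_of_nat_mult[symmetric] mult.commute)
  also have "\<dots> \<le> exp (eta * \<bar>r (h n)\<bar>)"
    using h[of n] r \<open>Kc \<ge> 1\<close> \<open>eta > 0\<close> by simp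
  finally have "cmod (Atil (h n) $ k $ k) * exp eta ^ n \<le> norm (Atil (h n)) * exp (eta * \<bar>r (h n)\<bar>)"
    by (intro mult_mono norm_diag_le_norm) auto
  then show "cmod (Atil (h n) $ k $ k) * exp eta ^ n
      \<le> (SUP t. norm (A (h n) t)) * exp (eta * \<bar>r (h n)\<bar>)"
    by (simp add: A)
qed

theorem lemma6p8:
  fixes eta :: real and r :: "int \<Rightarrow> real"
    and A :: "int \<Rightarrow> real \<Rightarrow> complex^'m^'m"
    and K :: "real \<Rightarrow> real \<Rightarrow> complex^'m^'m"
    and Kc :: int and Atil :: "int \<Rightarrow> complex^'m^'m" and Ktil :: "real \<Rightarrow> complex^'m^'m"
  assumes "eta > 0"
    and "HA eta r A" and "HK eta K" and "HH eta r A K"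
    and "HSh1 r A K Kc Atil Ktil"
  defines "alpha \<equiv> (\<lambda>k n. Atil (- (Kc + int n)) $ k $ k)"
    and "beta \<equiv> (\<lambda>k n. Atil (Kc + int n) $ k $ k)"
  shows "(\<forall>k. infinite_dim_span (shift_orbit (alpha k)) \<and> infinite_dim_span (shift_orbit (beta k)))
     \<longleftrightarrow> (\<forall>k. cyclic_bshift (alpha k) \<and> cyclic_bshift (beta k))"
proof -
  have Hb: "Hb r A K Kc Atil Ktil" using assms(5) unfolding HSh1_def by blast
  then have "Kc \<ge> 1" unfolding Hb_def by blast
  have "summable (\<lambda>n. cmod (alpha k n) * exp eta ^ n)" for k
    using summable_diag_exp_decay[OF assms(2) Hb assms(1), of "\<lambda>n. - (Kc + int n)"] \<open>Kc \<ge> 1\<close>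
    unfolding alpha_def by (simp add: inj_def)
  moreover have "summable (\<lambda>n. cmod (beta k n) * exp eta ^ n)" for k
    using summable_diag_exp_decay[OF assms(2) Hb assms(1), of "\<lambda>n. Kc + int n"] \<open>Kc \<ge> 1\<close>
    unfolding beta_def by (simp add: inj_def)
  ultimately show ?thesis
    using cyclic_iff_infinite_dim_span_if_exp_decay[of "exp eta"] \<open>eta > 0\<close> by simp
qed

end
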